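(* Let $\mu$ be a probability measure on $\mathbb{R}$ satisfying the standing assumptions below and $\int_{\mathbb{R}}|x|\,d\mu<+\infty$, with support interval $I$. Let $\vec X_n$ be a random vector of $n$ i.i.d. variables with law $\mu$ and let $\vec v\in(0,1)^k$ be a percentile vector. Then \[ \lim_{n\to\infty}\frac{\mathbb{E}[SC_{\vec v}(\vec X_n)]}{\mathbb{E}[SC_{opt}(\vec X_n)]}=\frac{W_1(\mu,\nu_{Q_{\vec v}})}{W_1(\mu,\nu^{(k)})}, \] where $\nu^{(k)}$ is a solution to $\min_{\lambda\in\mathcal{P}_k(\mathbb{R})}W_1(\mu,\lambda)$ and $\nu_{Q_{\vec v}}=\sum_{i=1}^k(F_\mu(z_i)-F_\mu(z_{i-1}))\delta_{F_\mu^{[-1]}(v_i)}$ with $z_i=\frac{F_\mu^{[-1]}(v_i)+F_\mu^{[-1]}(v_{i+1})}{2}$ for $1\le i\le k-1$, $z_0=\inf I$, $z_k=\sup I$.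
   Context: For $\vec x\in\mathbb{R}^n$, $\vec y\in\mathbb{R}^k$: $SC(\vec x,\vec y)=\frac1n\sum_i\min_j|x_i-y_j|$, $SC_{opt}(\vec x)=\min_{\vec y}SC(\vec x,\vec y)$. A percentile vector is $\vec v$ with $0\le v_1\le\dots\le v_k\le1$; $\mathcal{PM}_{\vec v}$ sorts the reports $x_{(1)}\le\dots\le x_{(n)}$ and places facility $j$ at $x_{(\lfloor(n-1)v_j\rfloor+1)}$; $SC_{\vec v}(\vec x)$ is the Social Cost of its output. $\mathcal{P}_k(\mathbb{R})$: probability measures $\sum_{j=1}^k\nu_j\delta_{x_j}$ ($\nu_j\ge0$, $\sum\nu_j=1$). $W_1$ is the 1-Wasserstein distance $\min_{\pi\in\Pi(\alpha,\beta)}\int|x-y|d\pi$. $F_\mu$ is the c.d.f. of $\mu$, $F_\mu^{[-1]}(t)=\inf\{x:F_\mu(x)\ge t\}$. Standing assumptions on $\mu$: absolutely continuous with density $\rho_\mu$; support an interval on whose interior $\rho_\mu>0$; $\rho_\mu$ differentiable on the support. *)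

theory Defs
  imports "HOL-Probability.Probability"
begin

text \<open>Reports are x :: nat => real with indices 0..n-1; facility locations are
  y :: nat => real with indices 0..k-1 (values outside these ranges are irrelevant).\<close>

definition SC :: "nat \<Rightarrow> nat \<Rightarrow> (nat \<Rightarrow> real) \<Rightarrow> (nat \<Rightarrow> real) \<Rightarrow> real" where
  "SC n k x y = (1 / real n) * (\<Sum>i<n. Min ((\<lambda>j. \<bar>x i - y j\<bar>) ` {..<k}))"

definition SC_opt :: "nat \<Rightarrow> nat \<Rightarrow> (nat \<Rightarrow> real) \<Rightarrow> real" where
  "SC_opt n k x = (INF y. SC n k x y)"

definition percentile_vector :: "nat \<Rightarrow> (nat \<Rightarrow> real) \<Rightarrow> bool" where
  "percentile_vector k v \<longleftrightarrow> (\<forall>j<k. 0 \<le> v j \<and> v j \<le> 1) \<and> (\<forall>j. Suc j < k \<longrightarrow> v j \<le> v (Suc j))"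

text \<open>Percentile mechanism: facility j is placed at the (floor((n-1) v_j)+1)-th smallest
  report, i.e. at 0-based position floor((n-1) v_j) of the sorted reports.\<close>
definition PM :: "nat \<Rightarrow> nat \<Rightarrow> (nat \<Rightarrow> real) \<Rightarrow> (nat \<Rightarrow> real) \<Rightarrow> (nat \<Rightarrow> real)" where
  "PM n k v x = (\<lambda>j. sort (map x [0..<n]) ! nat \<lfloor>real (n - 1) * v j\<rfloor>)"

definition SC_PM :: "nat \<Rightarrow> nat \<Rightarrow> (nat \<Rightarrow> real) \<Rightarrow> (nat \<Rightarrow> real) \<Rightarrow> real" where
  "SC_PM n k v x = SC n k x (PM n k v x)"

definition cdf :: "real measure \<Rightarrow> real \<Rightarrow> real" where
  "cdf M x = measure M {..x}"

definition cdf_inv :: "real measure \<Rightarrow> real \<Rightarrow> real" where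
  "cdf_inv M t = Inf {x. cdf M x \<ge> t}"

definition cdf_ext :: "real measure \<Rightarrow> ereal \<Rightarrow> real" where
  "cdf_ext M z = (if z = -\<infinity> then 0 else if z = \<infinity> then 1 else cdf M (real_of_ereal z))"

definition discrete_measure :: "nat \<Rightarrow> (nat \<Rightarrow> real) \<Rightarrow> (nat \<Rightarrow> real) \<Rightarrow> real measure" where
  "discrete_measure k w p = measure_of UNIV (sets borel) (\<lambda>A. \<Sum>j<k. ennreal (w j) * indicator A (p j))"

definition Pk :: "nat \<Rightarrow> real measure set" where
  "Pk k = {discrete_measure k w p | w p. (\<forall>j<k. w j \<ge> 0) \<and> (\<Sum>j<k. w j) = 1}"

definition couplings :: "real measure \<Rightarrow> real measure \<Rightarrow> (real \<times> real) measure set" where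
  "couplings \<alpha> \<beta> = {\<pi>. sets \<pi> = sets (borel \<Otimes>\<^sub>M borel) \<and>
     (\<forall>A \<in> sets borel. emeasure \<pi> (A \<times> UNIV) = emeasure \<alpha> A \<and> emeasure \<pi> (UNIV \<times> A) = emeasure \<beta> A)}"

definition W1 :: "real measure \<Rightarrow> real measure \<Rightarrow> ennreal" where
  "W1 \<alpha> \<beta> = (INF \<pi> \<in> couplings \<alpha> \<beta>. \<integral>\<^sup>+ z. ennreal \<bar>fst z - snd z\<bar> \<partial>\<pi>)"

text \<open>The measure nu_{Q_v}: atoms q_j = F^{-1}(v_j) (j<k); boundaries z_0 = inf I,
  z_j = (q_{j-1}+q_j)/2 for 1<=j<=k-1, z_k = sup I; atom q_j has weight F(z_{j+1}) - F(z_j).\<close>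
definition nu_Q :: "real measure \<Rightarrow> real set \<Rightarrow> nat \<Rightarrow> (nat \<Rightarrow> real) \<Rightarrow> real measure" where
  "nu_Q M I k v =
     (let q = (\<lambda>j. cdf_inv M (v j));
          z = (\<lambda>j::nat. if j = 0 then Inf (ereal ` I) else if j = k then Sup (ereal ` I)
                        else ereal ((q (j - 1) + q j) / 2))
      in discrete_measure k (\<lambda>j. cdf_ext M (z (Suc j)) - cdf_ext M (z j)) q)"

definition standing_assumptions :: "real measure \<Rightarrow> (real \<Rightarrow> real) \<Rightarrow> real set \<Rightarrow> bool" where
  "standing_assumptions M \<rho> I \<longleftrightarrow>
     prob_space M \<and> \<rho> \<in> borel_measurable borel \<and> (\<forall>x. \<rho> x \<ge> 0) \<and>
     M = density lborel (\<lambda>x. ennreal (\<rho> x)) \<and>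
     is_interval I \<and> closed I \<and> interior I \<noteq> {} \<and>
     (\<forall>x. x \<notin> I \<longrightarrow> \<rho> x = 0) \<and> (\<forall>x\<in>interior I. \<rho> x > 0) \<and>
     \<rho> differentiable_on I"

end

(* By the coupling of each point with its nearest centre, the 1-Wasserstein distance from mu to a
   measure carried by centres p_1, ..., p_k is at least the k-median cost
   cost p = integral of min_j |x - p_j| d mu, with equality for the measure giving each centre
   the mass of its Voronoi cell.  Hence the minimum of W1 over P_k is the optimal k-median cost
   OPT, which is attained by a compactness and Fatou argument, and W1(mu, nu_Q) = cost q for the
   quantiles q_j = F^{-1}(v_j), since nu_Q is exactly the Voronoi measure of these points.

   The expected optimal social cost converges to OPT: it is at most OPT because the expected
   social cost of fixed centres p is cost p, and at least OPT - o(1) because after rounding the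
   sample to a finite grid only the empirical frequencies of finitely many cells matter, and these
   concentrate by a variance bound.  The percentile mechanism puts its j-th facility at the order
   statistic of rank floor((n - 1) v_j), which converges in L1 to the unique v_j-quantile; as the
   social cost is 1-Lipschitz in the facilities, the expected social cost of the mechanism
   converges to cost q.  The theorem is the ratio of the two limits. *)

theory Submission
  imports Defs
begin

section \<open>Distance to the nearest centre\<close>

definition center_dist :: "nat \<Rightarrow> (nat \<Rightarrow> real) \<Rightarrow> real \<Rightarrow> real" where
  "center_dist k p x = Min ((\<lambda>j. \<bar>x - p j\<bar>) ` {..<k})"

lemma center_dist_le: "j < k \<Longrightarrow> center_dist k p x \<le> \<bar>x - p j\<bar>"
  unfolding center_dist_def by (rule Min_le) auto

lemma center_dist_attained:
  assumes "1 \<le> k"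
  obtains j where "j < k" "center_dist k p x = \<bar>x - p j\<bar>"
proof -
  have "center_dist k p x \<in> (\<lambda>j. \<bar>x - p j\<bar>) ` {..<k}"
    unfolding center_dist_def using assms by (intro Min_in) (auto simp: lessThan_empty_iff)
  then show ?thesis using that by auto
qed

lemma center_dist_greatest:
  "1 \<le> k \<Longrightarrow> (\<And>j. j < k \<Longrightarrow> a \<le> \<bar>x - p j\<bar>) \<Longrightarrow> a \<le> center_dist k p x"
  by (metis center_dist_attained)

lemma center_dist_nonneg: "1 \<le> k \<Longrightarrow> 0 \<le> center_dist k p x"
  by (rule center_dist_greatest) auto

lemma center_dist_le_abs: "1 \<le> k \<Longrightarrow> center_dist k p x \<le> \<bar>x\<bar> + \<bar>p 0\<bar>"
  using center_dist_le[of 0 k p x] by auto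

lemma center_dist_lipschitz:
  assumes "1 \<le> k"
  shows "center_dist k p x \<le> center_dist k p x' + \<bar>x - x'\<bar>"
proof -
  obtain j where "j < k" "center_dist k p x' = \<bar>x' - p j\<bar>"
    using center_dist_attained[OF assms] .
  then show ?thesis using center_dist_le[of j k p x] by linarith
qed

lemma center_dist_perturb_centers:
  assumes "1 \<le> k" and "\<And>j. j < k \<Longrightarrow> \<bar>p j - p' j\<bar> \<le> d"
  shows "center_dist k p x \<le> center_dist k p' x + d"
proof -
  obtain j where "j < k" "center_dist k p' x = \<bar>x - p' j\<bar>"
    using center_dist_attained[OF assms(1)] .
  then show ?thesis using center_dist_le[of j k p x] assms(2)[of j] by linarith
qed

lemma borel_measurable_center_dist[measurable]: "center_dist k p \<in> borel_measurable borel"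
  unfolding center_dist_def by measurable

definition nearest_center :: "nat \<Rightarrow> (nat \<Rightarrow> real) \<Rightarrow> real \<Rightarrow> nat" where
  "nearest_center k p x = (LEAST j. j < k \<and> center_dist k p x = \<bar>x - p j\<bar>)"

lemma nearest_center:
  assumes "1 \<le> k"
  shows "nearest_center k p x < k" "center_dist k p x = \<bar>x - p (nearest_center k p x)\<bar>"
proof -
  obtain j where "j < k \<and> center_dist k p x = \<bar>x - p j\<bar>"
    using center_dist_attained[OF assms] by metis
  from LeastI[of "\<lambda>j. j < k \<and> center_dist k p x = \<bar>x - p j\<bar>", OF this] show "nearest_center k p x < k" "center_dist k p x = \<bar>x - p (nearest_center k p x)\<bar>"
    unfolding nearest_center_def by auto
qed

lemma measurable_nearest_center[measurable]: "nearest_center k p \<in> borel \<rightarrow>\<^sub>M count_space UNIV"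
  unfolding nearest_center_def by measurable

lemma center_dist_le_liminf:
  assumes k: "1 \<le> k"
    and P: "\<And>j. j < k \<Longrightarrow> (\<lambda>m. P m j) \<longlonglongrightarrow> p j \<or> (\<forall>B. eventually (\<lambda>m. B < \<bar>P m j\<bar>) sequentially)"
  shows "ennreal (center_dist k p x) \<le> liminf (\<lambda>m. ennreal (center_dist k (P m) x))"
proof -
  have eventually_above: "eventually (\<lambda>m. c < center_dist k (P m) x) sequentially"
    if c: "c < center_dist k p x" for c
  proof -
    have "eventually (\<lambda>m. c < \<bar>x - P m j\<bar>) sequentially" if j: "j < k" for j
      using P[OF j]
    proof
      assume "(\<lambda>m. P m j) \<longlonglongrightarrow> p j"
      then have "(\<lambda>m. \<bar>x - P m j\<bar>) \<longlonglongrightarrow> \<bar>x - p j\<bar>" by (intro tendsto_intros)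
      moreover have "c < \<bar>x - p j\<bar>" using c center_dist_le[OF j, of p x] by linarith
      ultimately show ?thesis by (rule order_tendstoD(1))
    next
      assume "\<forall>B. eventually (\<lambda>m. B < \<bar>P m j\<bar>) sequentially"
      then have "eventually (\<lambda>m. c + \<bar>x\<bar> < \<bar>P m j\<bar>) sequentially" by blast
      then show ?thesis by eventually_elim linarith
    qed
    then have "eventually (\<lambda>m. \<forall>j\<in>{..<k}. c < \<bar>x - P m j\<bar>) sequentially"
      by (intro eventually_ball_finite) auto
    then show ?thesis
      by eventually_elim (metis center_dist_attained[OF k] lessThan_iff)
  qed
  show ?thesis
    unfolding le_Liminf_iff
  proof (intro allI impI)
    fix y :: ennreal assume y: "y < ennreal (center_dist k p x)"
    then obtain c where c: "0 \<le> c" "y = ennreal c"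
      by (cases y rule: ennreal_cases) auto
    then have "c < center_dist k p x"
      using y center_dist_nonneg[OF k] by (simp add: ennreal_less_iff)
    from eventually_above[OF this]
    show "eventually (\<lambda>m. y < ennreal (center_dist k (P m) x)) sequentially"
      by eventually_elim (use c in \<open>simp add: ennreal_less_iff\<close>)
  qed
qed

section \<open>Social cost\<close>

lemma SC_eq_center_dist: "SC n k x y = (1 / real n) * (\<Sum>i<n. center_dist k y (x i))"
  unfolding SC_def center_dist_def ..

lemma SC_nonneg: "1 \<le> k \<Longrightarrow> 0 \<le> SC n k x y"
  unfolding SC_eq_center_dist by (simp add: center_dist_nonneg sum_nonneg)

lemma SC_perturb_centers:
  assumes "1 \<le> k" and "\<And>j. j < k \<Longrightarrow> \<bar>y j - y' j\<bar> \<le> e"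
  shows "SC n k x y \<le> SC n k x y' + e"
proof (cases "n = 0")
  case True
  then show ?thesis using assms(2)[of 0] assms(1) by (simp add: SC_def)
next
  case False
  have "(\<Sum>i<n. center_dist k y (x i)) \<le> (\<Sum>i<n. center_dist k y' (x i) + e)"
    using center_dist_perturb_centers[OF assms] by (intro sum_mono) auto
  then show ?thesis
    using False unfolding SC_eq_center_dist by (simp add: sum.distrib field_simps)
qed

lemma SC_opt_le_SC: "1 \<le> k \<Longrightarrow> SC_opt n k x \<le> SC n k x y"
  unfolding SC_opt_def by (rule cINF_lower) (auto intro!: bdd_belowI2 SC_nonneg)

lemma SC_opt_nonneg: "1 \<le> k \<Longrightarrow> 0 \<le> SC_opt n k x"
  unfolding SC_opt_def by (rule cINF_greatest) (auto simp: SC_nonneg)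

text \<open>\<open>SC_opt\<close> is an infimum over all centre vectors; restricting it to the countable set of
  rational ones makes its measurability evident.\<close>

definition rational_centers :: "(nat \<Rightarrow> real) set" where
  "rational_centers = range (\<lambda>l::rat list. \<lambda>j. if j < length l then of_rat (l ! j) else 0)"

lemma rational_centers_approx:
  assumes "0 < e"
  obtains y' where "y' \<in> rational_centers" "\<And>j. j < k \<Longrightarrow> \<bar>y' j - y j\<bar> \<le> e"
proof -
  have "\<forall>j. \<exists>r::rat. y j - e < of_rat r \<and> of_rat r < y j + e"
    using assms by (intro allI of_rat_dense) simp
  then obtain r where r: "\<And>j. y j - e < of_rat (r j) \<and> of_rat (r j) < y j + e" by metis
  let ?y' = "\<lambda>j. if j < length (map r [0..<k]) then of_rat (map r [0..<k] ! j) else (0::real)"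
  have "?y' \<in> rational_centers" unfolding rational_centers_def by blast
  moreover have "\<bar>?y' j - y j\<bar> \<le> e" if "j < k" for j
    using r[of j] that by (simp add: abs_le_iff)
  ultimately show ?thesis using that by blast
qed

lemma SC_opt_eq_INF_rational:
  assumes "1 \<le> k"
  shows "SC_opt n k x = (INF y\<in>rational_centers. SC n k x y)"
proof (rule antisym)
  have bdd: "bdd_below ((\<lambda>y. SC n k x y) ` A)" for A
    using SC_nonneg[OF assms] by (intro bdd_belowI2)
  show "SC_opt n k x \<le> (INF y\<in>rational_centers. SC n k x y)"
    unfolding SC_opt_def by (rule cINF_superset_mono[OF _ bdd]) (auto simp: rational_centers_def)
  show "(INF y\<in>rational_centers. SC n k x y) \<le> SC_opt n k x"
    unfolding SC_opt_def
  proof (rule cINF_greatest[OF UNIV_not_empty], rule field_le_epsilon)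
    fix y and e :: real assume "0 < e"
    then obtain y' where "y' \<in> rational_centers" "\<And>j. j < k \<Longrightarrow> \<bar>y' j - y j\<bar> \<le> e"
      using rational_centers_approx by metis
    then show "(INF y\<in>rational_centers. SC n k x y) \<le> SC n k x y + e"
      using SC_perturb_centers[OF assms] by (meson cINF_lower[OF bdd] order_trans)
  qed
qed

section \<open>Transport to finitely many points\<close>

lemma emeasure_distr_point_measure:
  fixes k :: nat and p :: "nat \<Rightarrow> real"
  assumes "A \<in> sets borel"
  shows "emeasure (distr (point_measure {..<k} (\<lambda>j. ennreal (w j))) borel p) A
    = (\<Sum>j<k. ennreal (w j) * indicator A (p j))"
proof -
  have "p \<in> point_measure {..<k} (\<lambda>j. ennreal (w j)) \<rightarrow>\<^sub>M borel"
    by (simp add: measurable_def space_point_measure sets_point_measure)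
  then have "emeasure (distr (point_measure {..<k} (\<lambda>j. ennreal (w j))) borel p) A
      = emeasure (point_measure {..<k} (\<lambda>j. ennreal (w j))) (p -` A \<inter> {..<k})"
    using assms by (simp add: emeasure_distr space_point_measure)
  also have "\<dots> = (\<Sum>j\<in>{..<k} \<inter> (p -` A \<inter> {..<k}). ennreal (w j))"
    by (subst emeasure_point_measure_finite) (auto intro!: sum.cong)
  also have "\<dots> = (\<Sum>j<k. ennreal (w j) * indicator A (p j))"
    by (rule sum.mono_neutral_cong_left) (auto simp: indicator_def)
  finally show ?thesis .
qed

lemma discrete_measure_eq_distr:
  "discrete_measure k w p = distr (point_measure {..<k} (\<lambda>j. ennreal (w j))) borel p"
  (is "_ = ?N")
proof -
  have "discrete_measure k w p = measure_of UNIV (sets borel) (emeasure ?N)"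
    unfolding discrete_measure_def
    by (rule measure_of_eq) (auto simp: emeasure_distr_point_measure sets.sigma_sets_eq[of borel, simplified])
  also have "\<dots> = ?N"
    using measure_of_of_measure[of ?N] by simp
  finally show ?thesis .
qed

lemma emeasure_discrete_measure:
  "A \<in> sets borel \<Longrightarrow> emeasure (discrete_measure k w p) A = (\<Sum>j<k. ennreal (w j) * indicator A (p j))"
  unfolding discrete_measure_eq_distr by (rule emeasure_distr_point_measure)

lemma discrete_measure_cong:
  "(\<And>j. j < k \<Longrightarrow> w j = w' j) \<Longrightarrow> discrete_measure k w p = discrete_measure k w' p"
  unfolding discrete_measure_def by (intro arg_cong[where f="measure_of _ _"] ext sum.cong) auto

lemma nn_integral_center_dist_le_W1:
  assumes sets_M: "sets M = sets borel" and k: "1 \<le> k"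
  shows "(\<integral>\<^sup>+x. ennreal (center_dist k p x) \<partial>M) \<le> W1 M (discrete_measure k w p)"
  unfolding W1_def
proof (rule INF_greatest)
  fix \<pi> assume "\<pi> \<in> couplings M (discrete_measure k w p)"
  then have sets_\<pi>: "sets \<pi> = sets (borel \<Otimes>\<^sub>M borel)"
    and fst_marginal: "\<And>A. A \<in> sets borel \<Longrightarrow> emeasure \<pi> (A \<times> UNIV) = emeasure M A"
    and snd_marginal: "\<And>A. A \<in> sets borel \<Longrightarrow> emeasure \<pi> (UNIV \<times> A) = emeasure (discrete_measure k w p) A"
    unfolding couplings_def by auto
  have space_\<pi>: "space \<pi> = UNIV"
    using sets_eq_imp_space_eq[OF sets_\<pi>] by (simp add: space_pair_measure)
  have centers_closed: "- p ` {..<k} \<in> sets borel"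
    by (intro borel_comp borel_closed finite_imp_closed) auto
  have "UNIV \<times> - p ` {..<k} \<in> null_sets \<pi>"
    using snd_marginal[OF centers_closed] centers_closed sets_\<pi>
    by (simp add: emeasure_discrete_measure null_sets_def)
  then have AE_center: "AE z in \<pi>. snd z \<in> p ` {..<k}"
    by (rule AE_I') (auto simp: space_\<pi>)
  have fst_measurable: "fst \<in> \<pi> \<rightarrow>\<^sub>M borel"
    using measurable_fst by (simp add: measurable_cong_sets[OF sets_\<pi> refl])
  have marginal: "distr \<pi> borel fst = M"
  proof (rule measure_eqI)
    fix A assume "A \<in> sets (distr \<pi> borel fst)"
    moreover have "fst -` A \<inter> space \<pi> = A \<times> UNIV" by (auto simp: space_\<pi>)
    ultimately show "emeasure (distr \<pi> borel fst) A = emeasure M A"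
      using fst_marginal fst_measurable by (simp add: emeasure_distr)
  qed (simp add: sets_M)
  have "(\<integral>\<^sup>+x. ennreal (center_dist k p x) \<partial>M) = (\<integral>\<^sup>+z. ennreal (center_dist k p (fst z)) \<partial>\<pi>)"
    by (subst marginal[symmetric], subst nn_integral_distr[OF fst_measurable]) auto
  also have "\<dots> \<le> (\<integral>\<^sup>+z. ennreal \<bar>fst z - snd z\<bar> \<partial>\<pi>)"
    by (rule nn_integral_mono_AE, use AE_center in eventually_elim) (auto intro!: ennreal_leI center_dist_le)
  finally show "(\<integral>\<^sup>+x. ennreal (center_dist k p x) \<partial>M) \<le> (\<integral>\<^sup>+z. ennreal \<bar>fst z - snd z\<bar> \<partial>\<pi>)" .
qed

lemma distr_graph_in_couplings:
  assumes "finite_measure M" and sets_M: "sets M = sets borel"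
    and idx_measurable: "idx \<in> borel \<rightarrow>\<^sub>M count_space UNIV" and idx_less: "\<And>x. idx x < k"
  shows "distr M (borel \<Otimes>\<^sub>M borel) (\<lambda>x. (x, p (idx x)))
    \<in> couplings M (discrete_measure k (\<lambda>j. measure M {x. idx x = j}) p)"
  unfolding couplings_def
proof (intro CollectI conjI ballI)
  interpret finite_measure M by fact
  have space_M: "space M = UNIV" using sets_eq_imp_space_eq[OF sets_M] by simp
  have cells: "{x. idx x = j} \<in> sets M" for j
    using measurable_sets[OF idx_measurable, of "{j}"] by (simp add: sets_M vimage_def)
  let ?T = "\<lambda>x. (x, p (idx x))"
  have T_measurable: "?T \<in> M \<rightarrow>\<^sub>M borel \<Otimes>\<^sub>M borel"
    using idx_measurable by (simp add: measurable_cong_sets[OF sets_M refl])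
  fix A :: "real set" assume A: "A \<in> sets borel"
  have "?T -` (A \<times> UNIV) \<inter> space M = A" by (auto simp: space_M)
  then show "emeasure (distr M (borel \<Otimes>\<^sub>M borel) ?T) (A \<times> UNIV) = emeasure M A"
    using A T_measurable by (simp add: emeasure_distr)
  have "?T -` (UNIV \<times> A) \<inter> space M = (\<Union>j\<in>{j. j < k \<and> p j \<in> A}. {x. idx x = j})"
    using idx_less by (auto simp: space_M)
  then have "emeasure (distr M (borel \<Otimes>\<^sub>M borel) ?T) (UNIV \<times> A)
      = emeasure M (\<Union>j\<in>{j. j < k \<and> p j \<in> A}. {x. idx x = j})"
    using A T_measurable by (simp add: emeasure_distr)
  also have "\<dots> = (\<Sum>j\<in>{j. j < k \<and> p j \<in> A}. emeasure M {x. idx x = j})"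
    using cells by (intro sum_emeasure[symmetric]) (auto simp: disjoint_family_on_def)
  also have "\<dots> = (\<Sum>j<k. ennreal (measure M {x. idx x = j}) * indicator A (p j))"
    by (rule sum.mono_neutral_cong_left) (auto simp: indicator_def emeasure_eq_measure)
  also have "\<dots> = emeasure (discrete_measure k (\<lambda>j. measure M {x. idx x = j}) p) A"
    using A by (simp add: emeasure_discrete_measure)
  finally show "emeasure (distr M (borel \<Otimes>\<^sub>M borel) ?T) (UNIV \<times> A)
      = emeasure (discrete_measure k (\<lambda>j. measure M {x. idx x = j}) p) A" .
qed simp

lemma W1_cell_measure_le:
  assumes "finite_measure M" and sets_M: "sets M = sets borel"
    and idx_measurable: "idx \<in> borel \<rightarrow>\<^sub>M count_space UNIV" and idx_less: "\<And>x. idx x < k"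
    and idx_nearest: "\<And>x. center_dist k p x = \<bar>x - p (idx x)\<bar>"
  shows "W1 M (discrete_measure k (\<lambda>j. measure M {x. idx x = j}) p)
    \<le> (\<integral>\<^sup>+x. ennreal (center_dist k p x) \<partial>M)"
proof -
  have T_measurable: "(\<lambda>x. (x, p (idx x))) \<in> M \<rightarrow>\<^sub>M borel \<Otimes>\<^sub>M borel"
    using idx_measurable by (simp add: measurable_cong_sets[OF sets_M refl])
  have "W1 M (discrete_measure k (\<lambda>j. measure M {x. idx x = j}) p)
      \<le> (\<integral>\<^sup>+z. ennreal \<bar>fst z - snd z\<bar> \<partial>distr M (borel \<Otimes>\<^sub>M borel) (\<lambda>x. (x, p (idx x))))"
    unfolding W1_def by (rule INF_lower[OF distr_graph_in_couplings[OF assms(1-4)]])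
  also have "\<dots> = (\<integral>\<^sup>+x. ennreal (center_dist k p x) \<partial>M)"
  proof -
    have "(\<lambda>z::real \<times> real. ennreal \<bar>fst z - snd z\<bar>) \<in> borel_measurable (borel \<Otimes>\<^sub>M borel)"
      by measurable
    then show ?thesis
      using nn_integral_distr[OF T_measurable] by (simp add: idx_nearest)
  qed
  finally show ?thesis .
qed

lemma cell_measure_in_Pk:
  assumes "prob_space M" and sets_M: "sets M = sets borel"
    and idx_measurable: "idx \<in> borel \<rightarrow>\<^sub>M count_space UNIV" and idx_less: "\<And>x. idx x < k"
  shows "discrete_measure k (\<lambda>j. measure M {x. idx x = j}) p \<in> Pk k"
proof -
  interpret prob_space M by fact
  have cells: "{x. idx x = j} \<in> sets M" for j
    using measurable_sets[OF idx_measurable, of "{j}"] by (simp add: sets_M vimage_def)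
  have "(\<Sum>j<k. measure M {x. idx x = j}) = measure M (\<Union>j<k. {x. idx x = j})"
    using cells by (intro finite_measure_finite_Union[symmetric]) (auto simp: disjoint_family_on_def)
  also have "(\<Union>j<k. {x. idx x = j}) = space M"
    using idx_less sets_eq_imp_space_eq[OF sets_M] by auto
  finally show ?thesis
    unfolding Pk_def by (intro CollectI exI[of _ "\<lambda>j. measure M {x. idx x = j}"] exI[of _ p]) (auto simp: prob_space)
qed

section \<open>Independent samples\<close>

context prob_space
begin

abbreviation samples :: "nat \<Rightarrow> (nat \<Rightarrow> 'a) measure" where
  "samples n \<equiv> PiM {..<n} (\<lambda>_. M)"

lemma prob_space_samples: "prob_space (samples n)"
  by (intro prob_space_PiM prob_space_axioms)

lemma measurable_sample[measurable]: "i < n \<Longrightarrow> (\<lambda>x. x i) \<in> samples n \<rightarrow>\<^sub>M M"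
  by (rule measurable_component_singleton) simp

lemma distr_sample: "i < n \<Longrightarrow> distr (samples n) M (\<lambda>x. x i) = M"
  by (rule distr_PiM_component) (auto intro: prob_space_axioms)

lemma integrable_sample:
  fixes h :: "'a \<Rightarrow> real"
  assumes "integrable M h" "i < n"
  shows "integrable (samples n) (\<lambda>x. h (x i))"
  using assms integrable_distr_eq[OF measurable_sample[OF assms(2)], of h] by (simp add: distr_sample)

lemma integral_sample:
  fixes h :: "'a \<Rightarrow> real"
  assumes "h \<in> borel_measurable M" "i < n"
  shows "(\<integral>x. h (x i) \<partial>samples n) = (\<integral>x. h x \<partial>M)"
  using integral_distr[OF measurable_sample[OF assms(2)] assms(1)] by (simp add: distr_sample assms(2))

lemma integrable_sample_mean:
  fixes h :: "'a \<Rightarrow> real"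
  assumes "integrable M h"
  shows "integrable (samples n) (\<lambda>x. (1 / real n) * (\<Sum>i<n. h (x i)))"
  using assms integrable_sample by (intro integrable_mult_right integrable_sum) auto

lemma integral_sample_mean:
  fixes h :: "'a \<Rightarrow> real"
  assumes "integrable M h" "0 < n"
  shows "(\<integral>x. (1 / real n) * (\<Sum>i<n. h (x i)) \<partial>samples n) = (\<integral>x. h x \<partial>M)"
  using assms by (simp add: integrable_sample integral_sample)

lemma integral_sample_product:
  fixes g :: "'a \<Rightarrow> real"
  assumes "integrable M g" "i < n" "j < n" "i \<noteq> j"
  shows "(\<integral>x. g (x i) * g (x j) \<partial>samples n) = (\<integral>x. g x \<partial>M) * (\<integral>x. g x \<partial>M)"
proof -
  interpret product_sigma_finite "\<lambda>_::nat. M"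
    by (simp add: product_sigma_finite_def prob_space_imp_sigma_finite prob_space_axioms)
  define f where "f l = (if l = i \<or> l = j then g else (\<lambda>_. 1))" for l
  have "(\<integral>x. (\<Prod>l<n. f l (x l)) \<partial>samples n) = (\<Prod>l<n. integral\<^sup>L M (f l))"
    using assms(1) by (intro product_integral_prod) (auto simp: f_def)
  moreover have "(\<Prod>l<n. f l (x l)) = (\<Prod>l\<in>{i, j}. f l (x l))" for x
    using assms by (intro prod.mono_neutral_cong_right) (auto simp: f_def)
  moreover have "(\<Prod>l<n. integral\<^sup>L M (f l)) = (\<Prod>l\<in>{i, j}. integral\<^sup>L M (f l))"
    using assms by (intro prod.mono_neutral_cong_right) (auto simp: f_def prob_space)
  ultimately show ?thesis using assms(4) by (simp add: f_def)
qed

lemma integral_sample_mean_square_le: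
  fixes g :: "'a \<Rightarrow> real"
  assumes g_measurable[measurable]: "g \<in> borel_measurable M" and g_bounded: "\<And>x. \<bar>g x\<bar> \<le> 1"
    and g_centred: "(\<integral>x. g x \<partial>M) = 0" and "0 < n"
  shows "(\<integral>x. ((1 / real n) * (\<Sum>i<n. g (x i)))\<^sup>2 \<partial>samples n) \<le> 1 / real n"
proof -
  interpret S: prob_space "samples n" by (rule prob_space_samples)
  have integrable_g: "integrable M g"
    using g_bounded by (intro integrable_const_bound[where B=1]) (auto simp: g_measurable)
  have integrable_prod: "integrable (samples n) (\<lambda>x. g (x i) * g (x j))" if "i < n" "j < n" for i j
  proof (rule S.integrable_const_bound[where B=1])
    show "AE x in samples n. norm (g (x i) * g (x j)) \<le> 1"
      using g_bounded by (auto simp: abs_mult intro!: mult_le_one)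
  qed (use that in measurable)
  have square: "((1 / real n) * (\<Sum>i<n. g (x i)))\<^sup>2 = (1 / real n)\<^sup>2 * (\<Sum>i<n. \<Sum>j<n. g (x i) * g (x j))" for x
    by (simp add: power_mult_distrib power2_eq_square sum_product)
  have "(\<integral>x. (\<Sum>i<n. \<Sum>j<n. g (x i) * g (x j)) \<partial>samples n)
      = (\<Sum>i<n. \<integral>x. (\<Sum>j<n. g (x i) * g (x j)) \<partial>samples n)"
    by (rule Bochner_Integration.integral_sum) (auto intro!: integrable_sum integrable_prod)
  also have "\<dots> = (\<Sum>i<n. \<Sum>j<n. \<integral>x. g (x i) * g (x j) \<partial>samples n)"
    by (intro sum.cong refl Bochner_Integration.integral_sum) (auto intro!: integrable_prod)
  finally have "(\<integral>x. ((1 / real n) * (\<Sum>i<n. g (x i)))\<^sup>2 \<partial>samples n)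
      = (1 / real n)\<^sup>2 * (\<Sum>i<n. \<Sum>j<n. \<integral>x. g (x i) * g (x j) \<partial>samples n)"
    unfolding square by simp
  also have "(\<Sum>i<n. \<Sum>j<n. \<integral>x. g (x i) * g (x j) \<partial>samples n) = (\<Sum>i<n. \<integral>x. g (x i) * g (x i) \<partial>samples n)"
  proof (rule sum.cong[OF refl])
    fix i assume "i \<in> {..<n}"
    then have "(\<Sum>j<n. \<integral>x. g (x i) * g (x j) \<partial>samples n) = (\<Sum>j\<in>{i}. \<integral>x. g (x i) * g (x j) \<partial>samples n)"
      by (intro sum.mono_neutral_cong_right) (auto simp: integral_sample_product[OF integrable_g] g_centred)
    then show "(\<Sum>j<n. \<integral>x. g (x i) * g (x j) \<partial>samples n) = (\<integral>x. g (x i) * g (x i) \<partial>samples n)"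
      by simp
  qed
  also have "\<dots> \<le> (\<Sum>i<n. 1)"
  proof (intro sum_mono)
    fix i assume "i \<in> {..<n}"
    have "g (x i) * g (x i) \<le> 1" for x
      using g_bounded[of "x i"] by (simp add: abs_le_square_iff power2_eq_square[symmetric] abs_square_le_1)
    then show "(\<integral>x. g (x i) * g (x i) \<partial>samples n) \<le> 1"
      using S.integral_le_const[of "\<lambda>x. g (x i) * g (x i)" 1] integrable_prod \<open>i \<in> {..<n}\<close> by auto
  qed
  finally show ?thesis
    using \<open>0 < n\<close> by (simp add: power2_eq_square divide_simps)
qed

lemma integral_abs_le_sqrt_integral_square:
  fixes f :: "'a \<Rightarrow> real"
  assumes [measurable]: "f \<in> borel_measurable M" and "integrable M (\<lambda>x. (f x)\<^sup>2)"
  shows "(\<integral>x. \<bar>f x\<bar> \<partial>M) \<le> sqrt (\<integral>x. (f x)\<^sup>2 \<partial>M)"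
proof -
  have "integrable M (\<lambda>x. \<bar>f x\<bar>)"
    using square_integrable_imp_integrable[of f] assms by simp
  then have "0 \<le> (\<integral>x. (f x)\<^sup>2 \<partial>M) - (\<integral>x. \<bar>f x\<bar> \<partial>M)\<^sup>2"
    using variance_positive[of "\<lambda>x. \<bar>f x\<bar>"] variance_eq[of "\<lambda>x. \<bar>f x\<bar>"] assms(2) by simp
  then show ?thesis by (intro real_le_rsqrt) simp
qed

end

definition empirical_freq :: "nat \<Rightarrow> 'a set \<Rightarrow> (nat \<Rightarrow> 'a) \<Rightarrow> real" where
  "empirical_freq n A x = (1 / real n) * (\<Sum>i<n. indicator A (x i))"

lemma empirical_freq_nonneg: "0 \<le> empirical_freq n A x"
  unfolding empirical_freq_def by (simp add: sum_nonneg)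

lemma empirical_freq_le_1: "empirical_freq n A x \<le> 1"
proof -
  have "(\<Sum>i<n. indicator A (x i) :: real) \<le> real n"
    using sum_mono[of "{..<n}" "\<lambda>i. indicator A (x i) :: real" "\<lambda>_. 1"] by (simp add: indicator_def)
  then show ?thesis unfolding empirical_freq_def by (cases "n = 0") (auto simp: divide_simps)
qed

context prob_space
begin

lemma borel_measurable_empirical_freq[measurable]:
  assumes [measurable]: "A \<in> sets M"
  shows "empirical_freq n A \<in> borel_measurable (samples n)"
  unfolding empirical_freq_def by measurable

lemma integral_empirical_freq_square_dev:
  assumes A: "A \<in> events" and "0 < n"
  shows "integrable (samples n) (\<lambda>x. (empirical_freq n A x - prob A)\<^sup>2)"
    and "(\<integral>x. (empirical_freq n A x - prob A)\<^sup>2 \<partial>samples n) \<le> 1 / real n"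
proof -
  interpret S: prob_space "samples n" by (rule prob_space_samples)
  have "\<bar>empirical_freq n A x - prob A\<bar> \<le> 1" for x
    using empirical_freq_nonneg[of n A x] empirical_freq_le_1[of n A x] measure_nonneg[of M A] prob_le_1[of A]
    unfolding abs_le_iff by linarith
  then show "integrable (samples n) (\<lambda>x. (empirical_freq n A x - prob A)\<^sup>2)"
    by (intro S.integrable_const_bound[where B=1] AE_I2 borel_measurable_power borel_measurable_diff
        borel_measurable_const borel_measurable_empirical_freq A) (simp add: abs_square_le_1)
  define g where "g u = indicator A u - prob A" for u
  have "empirical_freq n A x - prob A = (1 / real n) * (\<Sum>i<n. g (x i))" for x
    unfolding g_def empirical_freq_def using \<open>0 < n\<close> by (simp add: sum_subtractf right_diff_distrib)
  moreover have "g \<in> borel_measurable M"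
    unfolding g_def[abs_def] by (intro borel_measurable_diff borel_measurable_const borel_measurable_indicator A)
  moreover have "integrable M (indicator A :: 'a \<Rightarrow> real)"
    using A by (simp add: emeasure_eq_measure)
  then have "(\<integral>u. g u \<partial>M) = 0"
    using A by (simp add: g_def prob_space)
  moreover have "\<bar>g u\<bar> \<le> 1" for u
    by (auto simp: g_def indicator_def)
  ultimately show "(\<integral>x. (empirical_freq n A x - prob A)\<^sup>2 \<partial>samples n) \<le> 1 / real n"
    using integral_sample_mean_square_le[of g n] \<open>0 < n\<close> by simp
qed

lemma integral_empirical_freq_abs_dev:
  assumes A: "A \<in> events" and "0 < n"
  shows "integrable (samples n) (\<lambda>x. \<bar>empirical_freq n A x - prob A\<bar>)"
    and "(\<integral>x. \<bar>empirical_freq n A x - prob A\<bar> \<partial>samples n) \<le> 1 / sqrt (real n)"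
proof -
  interpret S: prob_space "samples n" by (rule prob_space_samples)
  note square_dev = integral_empirical_freq_square_dev[OF assms]
  have dev_measurable: "(\<lambda>x. empirical_freq n A x - prob A) \<in> borel_measurable (samples n)"
    by (intro borel_measurable_diff borel_measurable_const borel_measurable_empirical_freq A)
  show "integrable (samples n) (\<lambda>x. \<bar>empirical_freq n A x - prob A\<bar>)"
    by (intro integrable_abs S.square_integrable_imp_integrable[OF dev_measurable square_dev(1)])
  have "(\<integral>x. \<bar>empirical_freq n A x - prob A\<bar> \<partial>samples n) \<le> sqrt (\<integral>x. (empirical_freq n A x - prob A)\<^sup>2 \<partial>samples n)"
    by (rule S.integral_abs_le_sqrt_integral_square[OF dev_measurable square_dev(1)])
  also have "\<dots> \<le> sqrt (1 / real n)"
    using square_dev(2) by (rule real_sqrt_le_mono)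
  also have "\<dots> = 1 / sqrt (real n)"
    by (simp add: real_sqrt_divide)
  finally show "(\<integral>x. \<bar>empirical_freq n A x - prob A\<bar> \<partial>samples n) \<le> 1 / sqrt (real n)" .
qed

end

section \<open>Order statistics\<close>

definition order_stat :: "nat \<Rightarrow> nat \<Rightarrow> (nat \<Rightarrow> real) \<Rightarrow> real" where
  "order_stat n m x = sort (map x [0..<n]) ! m"

lemma sum_sort_samples: "(\<Sum>i<n. f (x i)) = (\<Sum>i<n. f (sort (map x [0..<n]) ! i))"
proof -
  have "(\<Sum>i<n. f (x i)) = sum_list (map f (map x [0..<n]))"
    by (simp add: sum_list_sum_nth atLeast0LessThan)
  also have "\<dots> = sum_list (map f (sort (map x [0..<n])))"
    by (metis mset_map mset_sort sum_mset_sum_list)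
  also have "\<dots> = (\<Sum>i<n. f (sort (map x [0..<n]) ! i))"
    by (simp add: sum_list_sum_nth atLeast0LessThan)
  finally show ?thesis .
qed

lemma abs_order_stat_le:
  assumes "m < n"
  shows "\<bar>order_stat n m x\<bar> \<le> (\<Sum>i<n. \<bar>x i\<bar>)"
proof -
  have "order_stat n m x \<in> set (map x [0..<n])"
    unfolding order_stat_def using assms by (metis length_map length_sort length_upt minus_nat.diff_0 nth_mem set_sort)
  then obtain i where "i < n" "order_stat n m x = x i" by auto
  then show ?thesis using member_le_sum[of i "{..<n}" "\<lambda>i. \<bar>x i\<bar>"] by simp
qed

lemma order_stat_le_iff:
  assumes m: "m < n"
  shows "order_stat n m x \<le> t \<longleftrightarrow> real (Suc m) \<le> (\<Sum>i<n. indicator {..t} (x i))"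
proof -
  define s where "s = sort (map x [0..<n])"
  have len: "length s = n" and sorted: "sorted s" unfolding s_def by simp_all
  have count: "(\<Sum>i<n. indicator {..t} (x i) :: real) = (\<Sum>i<n. indicator {..t} (s ! i))"
    unfolding s_def by (rule sum_sort_samples)
  show ?thesis
  proof
    assume "order_stat n m x \<le> t"
    then have "s ! i \<le> t" if "i \<le> m" for i
      using sorted_nth_mono[OF sorted that] m len unfolding order_stat_def s_def[symmetric] by fastforce
    then have "real (Suc m) = (\<Sum>i\<le>m. indicator {..t} (s ! i))"
      by simp
    also have "\<dots> \<le> (\<Sum>i<n. indicator {..t} (s ! i))"
      using m by (intro sum_mono2) auto
    finally show "real (Suc m) \<le> (\<Sum>i<n. indicator {..t} (x i))" using count by simp
  next
    assume at_least: "real (Suc m) \<le> (\<Sum>i<n. indicator {..t} (x i))"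
    show "order_stat n m x \<le> t"
    proof (rule ccontr)
      assume "\<not> order_stat n m x \<le> t"
      then have "t < s ! i" if "m \<le> i" "i < n" for i
        using sorted_nth_mono[OF sorted that(1)] that len unfolding order_stat_def s_def[symmetric] by fastforce
      then have "(\<Sum>i<n. indicator {..t} (s ! i) :: real) = (\<Sum>i<m. indicator {..t} (s ! i))"
        using m by (intro sum.mono_neutral_cong_right) (auto simp: indicator_def not_le)
      also have "\<dots> \<le> real m"
        using sum_mono[of "{..<m}" "\<lambda>i. indicator {..t} (s ! i) :: real" "\<lambda>_. 1"] by (simp add: indicator_def)
      finally show False using at_least count by simp
    qed
  qed
qed

lemma order_stat_mono_sum:
  assumes m: "m < n" and g_nonneg: "\<And>t. 0 \<le> g t" and "mono g"
  shows "real (n - m) * g (order_stat n m x) \<le> (\<Sum>i<n. g (x i))"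
proof -
  define s where "s = sort (map x [0..<n])"
  have len: "length s = n" and sorted: "sorted s" unfolding s_def by simp_all
  have "real (n - m) * g (order_stat n m x) = (\<Sum>i\<in>{m..<n}. g (s ! m))"
    unfolding order_stat_def s_def by simp
  also have "\<dots> \<le> (\<Sum>i\<in>{m..<n}. g (s ! i))"
    using sorted_nth_mono[OF sorted] len \<open>mono g\<close> by (intro sum_mono) (auto intro: monoD)
  also have "\<dots> \<le> (\<Sum>i<n. g (s ! i))"
    using g_nonneg by (intro sum_mono2) auto
  finally show ?thesis unfolding s_def sum_sort_samples[symmetric] .
qed

lemma order_stat_antimono_sum:
  assumes m: "m < n" and g_nonneg: "\<And>t. 0 \<le> g t" and "antimono g"
  shows "real (Suc m) * g (order_stat n m x) \<le> (\<Sum>i<n. g (x i))"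
proof -
  define s where "s = sort (map x [0..<n])"
  have len: "length s = n" and sorted: "sorted s" unfolding s_def by simp_all
  have "real (Suc m) * g (order_stat n m x) = (\<Sum>i\<le>m. g (s ! m))"
    unfolding order_stat_def s_def by simp
  also have "\<dots> \<le> (\<Sum>i\<le>m. g (s ! i))"
    using sorted_nth_mono[OF sorted] len m \<open>antimono g\<close> by (intro sum_mono) (auto intro: antimonoD)
  also have "\<dots> \<le> (\<Sum>i<n. g (s ! i))"
    using g_nonneg m by (intro sum_mono2) auto
  finally show ?thesis unfolding s_def sum_sort_samples[symmetric] .
qed

lemma borel_measurable_order_stat:
  assumes m: "m < n" and components: "\<And>i. i < n \<Longrightarrow> (\<lambda>x. x i) \<in> borel_measurable S"
  shows "order_stat n m \<in> borel_measurable S"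
proof (subst borel_measurable_iff_le, intro allI)
  fix t
  have "(\<lambda>x. indicator {..t} (x i) :: real) \<in> borel_measurable S" if "i < n" for i
    using measurable_compose[OF components[OF that] borel_measurable_indicator[of "{..t}" borel]] by simp
  then have "{x \<in> space S. real (Suc m) \<le> (\<Sum>i<n. indicator {..t} (x i))} \<in> sets S"
    by (intro borel_measurable_le borel_measurable_const borel_measurable_sum) auto
  then show "{x \<in> space S. order_stat n m x \<le> t} \<in> sets S"
    by (simp add: order_stat_le_iff[OF m])
qed

section \<open>The k-median problem\<close>

lemma ereal_tendsto_imp_tendsto_or_unbounded:
  assumes "((\<lambda>m. ereal (f m)) \<longlongrightarrow> \<theta>) F"
  shows "(f \<longlongrightarrow> real_of_ereal \<theta>) F \<or> (\<forall>B. eventually (\<lambda>m. B < \<bar>f m\<bar>) F)"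
proof (cases \<theta>)
  case (real c)
  then show ?thesis
    using assms by simp
next
  case PInf
  have above: "eventually (\<lambda>m. ereal B < ereal (f m)) F" for B
    using assms PInf by (intro order_tendstoD(1)) auto
  have "eventually (\<lambda>m. B < \<bar>f m\<bar>) F" for B
    using above[of B] by (rule eventually_mono) auto
  then show ?thesis by blast
next
  case MInf
  have below: "eventually (\<lambda>m. ereal (f m) < ereal (- B)) F" for B
    using assms MInf by (intro order_tendstoD(2)) auto
  have "eventually (\<lambda>m. B < \<bar>f m\<bar>) F" for B
    using below[of B] by (rule eventually_mono) auto
  then show ?thesis by blast
qed

lemma seq_compact_subseq_components:
  fixes s :: "nat \<Rightarrow> nat \<Rightarrow> 'a::topological_space" and k :: nat
  assumes "seq_compact S" and "\<And>m j. s m j \<in> S"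
  shows "\<exists>r \<theta>. strict_mono r \<and> (\<forall>j<k. (\<lambda>m. s (r m) j) \<longlonglongrightarrow> \<theta> j)"
proof (induction k)
  case 0
  show ?case by (intro exI[of _ id]) (auto simp: strict_mono_def)
next
  case (Suc k)
  then obtain r \<theta> where r: "strict_mono r" and lim: "\<forall>j<k. (\<lambda>m. s (r m) j) \<longlonglongrightarrow> \<theta> j"
    by blast
  obtain l r' where r': "strict_mono r'" and l: "((\<lambda>m. s (r m) k) \<circ> r') \<longlonglongrightarrow> l"
    using seq_compactE[OF assms(1), of "\<lambda>m. s (r m) k"] assms(2) by metis
  have "(\<lambda>m. s (r (r' m)) j) \<longlonglongrightarrow> (\<theta>(k := l)) j" if "j < Suc k" for j
    using LIMSEQ_subseq_LIMSEQ[OF _ r', of "\<lambda>m. s (r m) j"] lim l that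
    by (cases "j = k") (auto simp: comp_def)
  then show ?case
    using strict_mono_o[OF r r'] by (intro exI[of _ "r \<circ> r'"] exI[of _ "\<theta>(k := l)"]) (auto simp: comp_def)
qed

definition tail_dev :: "real \<Rightarrow> real \<Rightarrow> real \<Rightarrow> real" where
  "tail_dev c K u = \<bar>u - c\<bar> * indicator {u. K < \<bar>u - c\<bar>} u"

lemma tail_dev_nonneg: "0 \<le> tail_dev c K u"
  by (simp add: tail_dev_def)

lemma abs_le_tail_dev: "0 \<le> K \<Longrightarrow> \<bar>u - c\<bar> \<le> K + tail_dev c K u"
  by (auto simp: tail_dev_def indicator_def)

lemma borel_measurable_tail_dev[measurable]: "tail_dev c K \<in> borel_measurable borel"
  unfolding tail_dev_def by measurable

locale finite_mean = prob_space M for M :: "real measure" +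
  assumes sets_M[measurable_cong]: "sets M = sets borel"
    and integrable_abs: "integrable M abs"
begin

lemma space_M[simp]: "space M = UNIV"
  using sets_eq_imp_space_eq[OF sets_M] by simp

lemma prob_UNIV[simp]: "prob UNIV = 1"
  using prob_space by simp

lemma integrable_tail_dev: "integrable M (tail_dev c K)"
proof (rule Bochner_Integration.integrable_bound)
  show "integrable M (\<lambda>u. \<bar>u\<bar> + \<bar>c\<bar>)"
    using integrable_abs by simp
  show "AE u in M. norm (tail_dev c K u) \<le> norm (\<bar>u\<bar> + \<bar>c\<bar>)"
    by (auto simp: tail_dev_def indicator_def)
qed measurable

lemma tail_dev_small:
  assumes "0 < e"
  shows "\<exists>K>0. (\<integral>u. tail_dev c K u \<partial>M) < e"
proof -
  have "(\<lambda>N. \<integral>u. tail_dev c (Suc N) u \<partial>M) \<longlonglongrightarrow> (\<integral>u. 0 \<partial>M)"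
  proof (rule integral_dominated_convergence[where w="\<lambda>u. \<bar>u\<bar> + \<bar>c\<bar>"])
    show "integrable M (\<lambda>u. \<bar>u\<bar> + \<bar>c\<bar>)"
      using integrable_abs by simp
    show "AE u in M. (\<lambda>N. tail_dev c (Suc N) u) \<longlonglongrightarrow> 0"
    proof (intro AE_I2 tendsto_eventually eventually_sequentiallyI)
      fix u :: real and N assume "nat \<lceil>\<bar>u - c\<bar>\<rceil> \<le> N"
      then show "tail_dev c (Suc N) u = 0" by (auto simp: tail_dev_def)
    qed
    show "\<And>N. AE u in M. norm (tail_dev c (Suc N) u) \<le> \<bar>u\<bar> + \<bar>c\<bar>"
      by (auto simp: tail_dev_def indicator_def)
  qed measurable
  then have "eventually (\<lambda>N. (\<integral>u. tail_dev c (Suc N) u \<partial>M) < e) sequentially"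
    using assms by (intro order_tendstoD(2)) auto
  then obtain N where "(\<integral>u. tail_dev c (Suc N) u \<partial>M) < e"
    by (auto simp: eventually_sequentially)
  then show ?thesis by (intro exI[of _ "real (Suc N)"]) auto
qed

end

locale kmedian = finite_mean +
  fixes k :: nat
  assumes k_pos: "1 \<le> k"
begin

definition cost :: "(nat \<Rightarrow> real) \<Rightarrow> real" where
  "cost p = (\<integral>x. center_dist k p x \<partial>M)"

definition OPT :: real where
  "OPT = (INF p. cost p)"

lemma integrable_center_dist: "integrable M (center_dist k p)"
proof (rule Bochner_Integration.integrable_bound)
  show "integrable M (\<lambda>x. \<bar>x\<bar> + \<bar>p 0\<bar>)"
    using integrable_abs by simp
  show "AE x in M. norm (center_dist k p x) \<le> norm (\<bar>x\<bar> + \<bar>p 0\<bar>)"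
    using center_dist_le_abs[OF k_pos] center_dist_nonneg[OF k_pos] by auto
qed measurable

lemma cost_nonneg: "0 \<le> cost p"
  unfolding cost_def using center_dist_nonneg[OF k_pos] by simp

lemma nn_integral_center_dist: "(\<integral>\<^sup>+x. ennreal (center_dist k p x) \<partial>M) = ennreal (cost p)"
  unfolding cost_def
  by (rule nn_integral_eq_integral[OF integrable_center_dist]) (simp add: center_dist_nonneg[OF k_pos])

lemma OPT_le_cost: "OPT \<le> cost p"
  unfolding OPT_def by (rule cINF_lower) (auto intro!: bdd_belowI2 cost_nonneg)

lemma OPT_nonneg: "0 \<le> OPT"
  unfolding OPT_def by (rule cINF_greatest) (auto simp: cost_nonneg)

lemma cost_le_liminf:
  assumes "\<And>j. j < k \<Longrightarrow> (\<lambda>m. P m j) \<longlonglongrightarrow> p j \<or> (\<forall>B. eventually (\<lambda>m. B < \<bar>P m j\<bar>) sequentially)"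
  shows "ennreal (cost p) \<le> liminf (\<lambda>m. ennreal (cost (P m)))"
proof -
  have "ennreal (cost p) = (\<integral>\<^sup>+x. ennreal (center_dist k p x) \<partial>M)"
    by (simp add: nn_integral_center_dist)
  also have "\<dots> \<le> (\<integral>\<^sup>+x. liminf (\<lambda>m. ennreal (center_dist k (P m) x)) \<partial>M)"
    by (intro nn_integral_mono center_dist_le_liminf[OF k_pos assms])
  also have "\<dots> \<le> liminf (\<lambda>m. \<integral>\<^sup>+x. ennreal (center_dist k (P m) x) \<partial>M)"
    by (intro nn_integral_liminf) measurable
  finally show ?thesis
    by (simp add: nn_integral_center_dist)
qed

lemma exists_minimising_centers: "\<exists>P. (\<lambda>m. cost (P m)) \<longlonglongrightarrow> OPT"
proof -
  have "ereal OPT = (INF p. ereal (cost p))"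
    unfolding OPT_def by (subst ereal_Inf') (auto intro!: bdd_belowI2 cost_nonneg simp: image_image)
  then obtain u where u: "\<And>m. u m \<in> range (\<lambda>p. ereal (cost p))" and u_lim: "u \<longlonglongrightarrow> ereal OPT"
    using Inf_as_limit[of "range (\<lambda>p. ereal (cost p))"] by (auto simp: image_image)
  have "\<forall>m. \<exists>p. u m = ereal (cost p)"
    using u by auto
  then obtain P where "\<And>m. u m = ereal (cost (P m))"
    by metis
  then have "u = (\<lambda>m. ereal (cost (P m)))"
    by auto
  then show ?thesis
    using u_lim by auto
qed

text \<open>Along a subsequence of a minimising sequence each centre converges in the extended
  reals; the centres escaping to infinity do not matter by \<open>cost_le_liminf\<close>, so the finite
  limits form an optimal centre vector.\<close>

lemma exists_optimal_centers: "\<exists>p. cost p = OPT"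
proof -
  obtain P where minimising: "(\<lambda>m. cost (P m)) \<longlonglongrightarrow> OPT"
    using exists_minimising_centers by blast
  obtain r \<theta> where r: "strict_mono r" and \<theta>: "\<forall>j<k. (\<lambda>m. ereal (P (r m) j)) \<longlonglongrightarrow> \<theta> j"
    using seq_compact_subseq_components[of UNIV "\<lambda>m j. ereal (P m j)" k]
    by (metis UNIV_I compact_UNIV compact_imp_seq_compact)
  define p where "p j = real_of_ereal (\<theta> j)" for j
  have "ennreal (cost p) \<le> liminf (\<lambda>m. ennreal (cost (P (r m))))"
    unfolding p_def using \<theta> by (intro cost_le_liminf ereal_tendsto_imp_tendsto_or_unbounded) blast
  also have "\<dots> = ennreal OPT"
    using LIMSEQ_subseq_LIMSEQ[OF minimising r]
    by (intro lim_imp_Liminf) (auto simp: comp_def intro: tendsto_ennrealI)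
  finally have "cost p \<le> OPT"
    using OPT_nonneg by simp
  then show ?thesis
    using OPT_le_cost[of p] by auto
qed

lemma W1_ge_OPT:
  assumes "\<nu> \<in> Pk k"
  shows "ennreal OPT \<le> W1 M \<nu>"
proof -
  obtain w p where "\<nu> = discrete_measure k w p"
    using assms unfolding Pk_def by blast
  then show ?thesis
    using nn_integral_center_dist_le_W1[OF sets_M k_pos, of p w] OPT_le_cost[of p]
    by (simp add: nn_integral_center_dist order_trans[OF ennreal_leI])
qed

lemma W1_cell_measure:
  assumes "idx \<in> borel \<rightarrow>\<^sub>M count_space UNIV" "\<And>x. idx x < k"
    and "\<And>x. center_dist k p x = \<bar>x - p (idx x)\<bar>"
  shows "W1 M (discrete_measure k (\<lambda>j. measure M {x. idx x = j}) p) = ennreal (cost p)"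
  using W1_cell_measure_le[OF finite_measure_axioms sets_M assms]
    nn_integral_center_dist_le_W1[OF sets_M k_pos]
  by (simp add: nn_integral_center_dist antisym)

lemma exists_W1_minimizer_eq_OPT: "\<exists>\<nu>\<in>Pk k. W1 M \<nu> = ennreal OPT"
proof -
  obtain p where "cost p = OPT"
    using exists_optimal_centers by blast
  then show ?thesis
    using nearest_center[OF k_pos] W1_cell_measure[of "nearest_center k p" p]
      cell_measure_in_Pk[OF prob_space_axioms sets_M, of "nearest_center k p" k p]
    by auto
qed

lemma borel_measurable_SC[measurable]: "(\<lambda>x. SC n k x y) \<in> borel_measurable (samples n)"
  unfolding SC_eq_center_dist by measurable

lemma borel_measurable_SC_opt[measurable]: "(\<lambda>x. SC_opt n k x) \<in> borel_measurable (samples n)"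
  unfolding SC_opt_eq_INF_rational[OF k_pos]
  by (rule borel_measurable_cINF_real) (auto simp: rational_centers_def)

lemma integrable_SC: "integrable (samples n) (\<lambda>x. SC n k x y)"
  unfolding SC_eq_center_dist by (rule integrable_sample_mean[OF integrable_center_dist])

lemma integral_SC: "0 < n \<Longrightarrow> (\<integral>x. SC n k x y \<partial>samples n) = cost y"
  unfolding SC_eq_center_dist cost_def by (rule integral_sample_mean[OF integrable_center_dist])

lemma integrable_SC_opt: "integrable (samples n) (\<lambda>x. SC_opt n k x)"
proof (rule Bochner_Integration.integrable_bound[OF integrable_SC[of n "\<lambda>_. 0"]])
  show "AE x in samples n. norm (SC_opt n k x) \<le> norm (SC n k x (\<lambda>_. 0))"
    using SC_opt_le_SC[OF k_pos] SC_opt_nonneg[OF k_pos] SC_nonneg[OF k_pos] by auto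
qed measurable

lemma integral_SC_opt_le_OPT: "(\<integral>x. SC_opt n k x \<partial>samples n) \<le> OPT"
proof (cases "n = 0")
  case True
  then show ?thesis using OPT_nonneg by (simp add: SC_opt_def SC_def)
next
  case False
  obtain p where "cost p = OPT"
    using exists_optimal_centers by blast
  moreover have "(\<integral>x. SC_opt n k x \<partial>samples n) \<le> (\<integral>x. SC n k x p \<partial>samples n)"
    by (intro integral_mono integrable_SC_opt integrable_SC SC_opt_le_SC[OF k_pos])
  ultimately show ?thesis
    using False integral_SC[of n p] by simp
qed

end

section \<open>The expected optimal social cost\<close>

definition clip :: "real \<Rightarrow> real \<Rightarrow> real" where
  "clip L t = max (- L) (min L t)"

lemma borel_measurable_clip[measurable]: "clip L \<in> borel_measurable borel"
  unfolding clip_def by measurable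

lemma abs_clip_le: "0 \<le> L \<Longrightarrow> \<bar>clip L t\<bar> \<le> L"
  unfolding clip_def by auto

lemma clip_closer: "\<bar>t\<bar> \<le> L \<Longrightarrow> \<bar>t - clip L a\<bar> \<le> \<bar>t - a\<bar>"
  unfolding clip_def by auto

lemma dist_clip_le_tail_dev: "0 \<le> L \<Longrightarrow> \<bar>t - clip L t\<bar> \<le> tail_dev 0 L t"
  unfolding clip_def tail_dev_def by (auto simp: indicator_def)

locale kmedian_grid = kmedian +
  fixes L \<delta> :: real
  assumes L_pos: "0 < L" and \<delta>_pos: "0 < \<delta>"
begin

definition grid_round :: "real \<Rightarrow> real" where
  "grid_round t = \<delta> * real_of_int \<lfloor>clip L t / \<delta>\<rfloor>"

definition grid_indices :: "int set" where
  "grid_indices = {\<lfloor>- L / \<delta>\<rfloor>..\<lfloor>L / \<delta>\<rfloor>}"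

definition grid_cell :: "int \<Rightarrow> real set" where
  "grid_cell l = {t. \<lfloor>clip L t / \<delta>\<rfloor> = l}"

definition rounding_cost :: real where
  "rounding_cost = (\<integral>t. \<bar>t - grid_round t\<bar> \<partial>M)"

lemma borel_measurable_grid_round[measurable]: "grid_round \<in> borel_measurable borel"
  unfolding grid_round_def by measurable

lemma grid_cell_in_sets[measurable]: "grid_cell l \<in> sets borel"
proof -
  have "grid_cell l = {t \<in> space borel. \<lfloor>clip L t / \<delta>\<rfloor> = l}"
    by (simp add: grid_cell_def)
  also have "\<dots> \<in> sets borel" by measurable
  finally show ?thesis .
qed

lemma floor_in_grid_indices: "\<lfloor>clip L t / \<delta>\<rfloor> \<in> grid_indices"
proof -
  have "- L \<le> clip L t" "clip L t \<le> L"
    using abs_clip_le[of L t] L_pos by auto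
  then have "- L / \<delta> \<le> clip L t / \<delta>" "clip L t / \<delta> \<le> L / \<delta>"
    using divide_right_mono[of "- L" "clip L t" \<delta>] divide_right_mono[of "clip L t" L \<delta>] \<delta>_pos by auto
  then show ?thesis unfolding grid_indices_def by (auto intro: floor_mono)
qed

lemma abs_grid_point_le:
  assumes "l \<in> grid_indices"
  shows "\<bar>\<delta> * real_of_int l\<bar> \<le> L + \<delta>"
proof -
  have "real_of_int \<lfloor>- L / \<delta>\<rfloor> \<le> real_of_int l" "real_of_int l \<le> real_of_int \<lfloor>L / \<delta>\<rfloor>"
    using assms unfolding grid_indices_def by auto
  then have "- L / \<delta> - 1 < real_of_int l" "real_of_int l \<le> L / \<delta>"
    by linarith+
  then have "- L - \<delta> < \<delta> * real_of_int l" "\<delta> * real_of_int l \<le> L"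
    using \<delta>_pos by (simp_all add: field_simps)
  then show ?thesis
    using \<delta>_pos unfolding abs_le_iff by (intro conjI) linarith+
qed

lemma abs_grid_round_le: "\<bar>grid_round t\<bar> \<le> L + \<delta>"
  unfolding grid_round_def by (rule abs_grid_point_le[OF floor_in_grid_indices])

lemma dist_grid_round_le: "\<bar>t - grid_round t\<bar> \<le> tail_dev 0 L t + \<delta>"
proof -
  define c where "c = clip L t"
  have "real_of_int \<lfloor>c / \<delta>\<rfloor> * \<delta> \<le> c"
    using pos_le_divide_eq[OF \<delta>_pos] by (metis of_int_floor_le)
  moreover have "c < (real_of_int \<lfloor>c / \<delta>\<rfloor> + 1) * \<delta>"
    using pos_divide_less_eq[OF \<delta>_pos] by (metis real_of_int_floor_add_one_gt)
  ultimately have "grid_round t \<le> clip L t" "clip L t < grid_round t + \<delta>"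
    unfolding grid_round_def c_def[symmetric] by (simp_all add: algebra_simps)
  then show ?thesis
    using dist_clip_le_tail_dev[of L t] L_pos by linarith
qed

lemma integrable_dist_grid_round: "integrable M (\<lambda>t. \<bar>t - grid_round t\<bar>)"
proof (rule Bochner_Integration.integrable_bound)
  show "integrable M (\<lambda>t. \<bar>t\<bar> + (L + \<delta>))"
    using integrable_abs by simp
  show "AE t in M. norm \<bar>t - grid_round t\<bar> \<le> norm (\<bar>t\<bar> + (L + \<delta>))"
    using abs_grid_round_le L_pos \<delta>_pos by (auto intro!: AE_I2 simp: abs_le_iff) (smt (verit) abs_grid_round_le)+
qed measurable

lemma rounding_cost_le: "rounding_cost \<le> (\<integral>t. tail_dev 0 L t \<partial>M) + \<delta>"
proof -
  have "rounding_cost \<le> (\<integral>t. tail_dev 0 L t + \<delta> \<partial>M)"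
    unfolding rounding_cost_def
    by (intro integral_mono integrable_dist_grid_round dist_grid_round_le
        Bochner_Integration.integrable_add integrable_tail_dev integrable_const)
  then show ?thesis
    using integrable_tail_dev by simp
qed

lemma center_dist_grid_round:
  "center_dist k y (grid_round t) = (\<Sum>l\<in>grid_indices. indicator (grid_cell l) t * center_dist k y (\<delta> * real_of_int l))"
proof -
  have "(\<Sum>l\<in>grid_indices. indicator (grid_cell l) t * center_dist k y (\<delta> * real_of_int l))
      = (\<Sum>l\<in>grid_indices. if \<lfloor>clip L t / \<delta>\<rfloor> = l then center_dist k y (\<delta> * real_of_int l) else 0)"
    by (intro sum.cong) (auto simp: grid_cell_def)
  also have "\<dots> = center_dist k y (grid_round t)"
    using floor_in_grid_indices[of t] by (simp add: grid_indices_def grid_round_def)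
  finally show ?thesis ..
qed

lemma OPT_le_grid_sum:
  "OPT - rounding_cost \<le> (\<Sum>l\<in>grid_indices. center_dist k y (\<delta> * real_of_int l) * prob (grid_cell l))"
proof -
  have integrable_cells: "integrable M (indicator (grid_cell l) :: real \<Rightarrow> real)" for l
    by (simp add: emeasure_eq_measure)
  have "OPT - rounding_cost \<le> cost y - rounding_cost"
    using OPT_le_cost by simp
  also have "\<dots> = (\<integral>t. center_dist k y t - \<bar>t - grid_round t\<bar> \<partial>M)"
    unfolding cost_def rounding_cost_def using integrable_center_dist integrable_dist_grid_round by simp
  also have "\<dots> \<le> (\<integral>t. center_dist k y (grid_round t) \<partial>M)"
  proof (rule integral_mono)
    show "integrable M (\<lambda>t. center_dist k y (grid_round t))"
      unfolding center_dist_grid_round by (intro Bochner_Integration.integrable_sum) (simp add: integrable_cells)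
    show "center_dist k y t - \<bar>t - grid_round t\<bar> \<le> center_dist k y (grid_round t)" for t
      using center_dist_lipschitz[OF k_pos, of y t "grid_round t"] by simp
  qed (use integrable_center_dist integrable_dist_grid_round in simp)
  also have "\<dots> = (\<Sum>l\<in>grid_indices. center_dist k y (\<delta> * real_of_int l) * prob (grid_cell l))"
    using integrable_cells by (simp add: center_dist_grid_round mult.commute)
  finally show ?thesis .
qed

lemma sample_mean_center_dist_grid_round:
  "(1 / real n) * (\<Sum>i<n. center_dist k y (grid_round (x i)))
    = (\<Sum>l\<in>grid_indices. center_dist k y (\<delta> * real_of_int l) * empirical_freq n (grid_cell l) x)"
  unfolding center_dist_grid_round empirical_freq_def sum_distrib_left
  by (subst sum.swap) (simp only: mult_ac)

lemma center_dist_clip_centers: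
  assumes "\<bar>t\<bar> \<le> L + \<delta>"
  shows "center_dist k (\<lambda>j. clip (L + \<delta>) (y j)) t \<le> center_dist k y t"
    and "center_dist k (\<lambda>j. clip (L + \<delta>) (y j)) t \<le> 2 * (L + \<delta>)"
proof -
  show "center_dist k (\<lambda>j. clip (L + \<delta>) (y j)) t \<le> center_dist k y t"
    using center_dist_le clip_closer[OF assms] by (blast intro: center_dist_greatest[OF k_pos] order_trans)
  have "\<bar>clip (L + \<delta>) (y 0)\<bar> \<le> L + \<delta>"
    using L_pos \<delta>_pos by (intro abs_clip_le) simp
  have "center_dist k (\<lambda>j. clip (L + \<delta>) (y j)) t \<le> \<bar>t - clip (L + \<delta>) (y 0)\<bar>"
    using k_pos by (intro center_dist_le) simp
  also have "\<dots> \<le> \<bar>t\<bar> + \<bar>clip (L + \<delta>) (y 0)\<bar>"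
    by (rule abs_triangle_ineq4)
  finally show "center_dist k (\<lambda>j. clip (L + \<delta>) (y j)) t \<le> 2 * (L + \<delta>)"
    using \<open>\<bar>clip (L + \<delta>) (y 0)\<bar> \<le> L + \<delta>\<close> assms by simp
qed

text \<open>Clipping the centres to \<open>[-L - \<delta>, L + \<delta>]\<close> keeps the costs of the grid points bounded
  without increasing them.\<close>

lemma SC_ge_grid:
  assumes "0 < n"
  shows "OPT - rounding_cost - (1 / real n) * (\<Sum>i<n. \<bar>x i - grid_round (x i)\<bar>)
      - 2 * (L + \<delta>) * (\<Sum>l\<in>grid_indices. \<bar>empirical_freq n (grid_cell l) x - prob (grid_cell l)\<bar>)
    \<le> SC n k x y"
proof -
  define c where "c l = center_dist k (\<lambda>j. clip (L + \<delta>) (y j)) (\<delta> * real_of_int l)" for l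
  have c_bounds: "0 \<le> c l" "c l \<le> 2 * (L + \<delta>)" if "l \<in> grid_indices" for l
    unfolding c_def
    using center_dist_nonneg[OF k_pos] center_dist_clip_centers(2)[OF abs_grid_point_le[OF that]] by auto
  have "OPT - rounding_cost \<le> (\<Sum>l\<in>grid_indices. c l * prob (grid_cell l))"
    unfolding c_def by (rule OPT_le_grid_sum)
  moreover have "(\<Sum>l\<in>grid_indices. c l * prob (grid_cell l)) \<le> (\<Sum>l\<in>grid_indices. c l * empirical_freq n (grid_cell l) x
      + 2 * (L + \<delta>) * \<bar>empirical_freq n (grid_cell l) x - prob (grid_cell l)\<bar>)"
  proof (rule sum_mono)
    fix l assume l: "l \<in> grid_indices"
    have "c l * (prob (grid_cell l) - empirical_freq n (grid_cell l) x)
        \<le> c l * \<bar>empirical_freq n (grid_cell l) x - prob (grid_cell l)\<bar>"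
      using c_bounds(1)[OF l] by (intro mult_left_mono) auto
    also have "\<dots> \<le> 2 * (L + \<delta>) * \<bar>empirical_freq n (grid_cell l) x - prob (grid_cell l)\<bar>"
      using c_bounds(2)[OF l] by (intro mult_right_mono) auto
    finally show "c l * prob (grid_cell l) \<le> c l * empirical_freq n (grid_cell l) x
        + 2 * (L + \<delta>) * \<bar>empirical_freq n (grid_cell l) x - prob (grid_cell l)\<bar>"
      by (simp add: algebra_simps)
  qed
  moreover have "(\<Sum>l\<in>grid_indices. c l * empirical_freq n (grid_cell l) x)
      = (1 / real n) * (\<Sum>i<n. center_dist k (\<lambda>j. clip (L + \<delta>) (y j)) (grid_round (x i)))"
    unfolding c_def by (rule sample_mean_center_dist_grid_round[symmetric])
  moreover have "\<dots> \<le> (1 / real n) * (\<Sum>i<n. center_dist k y (x i) + \<bar>x i - grid_round (x i)\<bar>)"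
  proof (intro mult_left_mono sum_mono)
    fix i
    show "center_dist k (\<lambda>j. clip (L + \<delta>) (y j)) (grid_round (x i)) \<le> center_dist k y (x i) + \<bar>x i - grid_round (x i)\<bar>"
      using center_dist_clip_centers(1)[OF abs_grid_round_le, of y "x i"]
        center_dist_lipschitz[OF k_pos, of y "grid_round (x i)" "x i"]
      by (simp add: abs_minus_commute)
  qed simp
  moreover have "\<dots> = SC n k x y + (1 / real n) * (\<Sum>i<n. \<bar>x i - grid_round (x i)\<bar>)"
    by (simp add: SC_eq_center_dist sum.distrib distrib_left)
  ultimately show ?thesis
    by (simp add: sum.distrib sum_distrib_left)
qed

lemma integral_SC_opt_ge_grid:
  assumes "0 < n"
  shows "OPT - 2 * rounding_cost - 2 * (L + \<delta>) * real (card grid_indices) / sqrt (real n)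
    \<le> (\<integral>x. SC_opt n k x \<partial>samples n)"
proof -
  interpret S: prob_space "samples n" by (rule prob_space_samples)
  let ?dev = "\<lambda>x. \<Sum>l\<in>grid_indices. \<bar>empirical_freq n (grid_cell l) x - prob (grid_cell l)\<bar>"
  let ?round = "\<lambda>x. (1 / real n) * (\<Sum>i<n. \<bar>x i - grid_round (x i)\<bar>)"
  note freq_dev = integral_empirical_freq_abs_dev[OF _ assms]
  have integrable_dev: "integrable (samples n) ?dev"
    using freq_dev(1) by (simp add: sets_M)
  have "(\<integral>x. ?dev x \<partial>samples n) = (\<Sum>l\<in>grid_indices. \<integral>x. \<bar>empirical_freq n (grid_cell l) x - prob (grid_cell l)\<bar> \<partial>samples n)"
    using freq_dev(1) by (intro Bochner_Integration.integral_sum) (simp add: sets_M)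
  also have "\<dots> \<le> (\<Sum>l\<in>grid_indices. 1 / sqrt (real n))"
    using freq_dev(2) by (intro sum_mono) (simp add: sets_M)
  finally have integral_dev: "(\<integral>x. ?dev x \<partial>samples n) \<le> real (card grid_indices) / sqrt (real n)"
    by simp
  have integrable_round: "integrable (samples n) ?round"
    and integral_round: "(\<integral>x. ?round x \<partial>samples n) = rounding_cost"
    using integrable_sample_mean[OF integrable_dist_grid_round, of n]
      integral_sample_mean[OF integrable_dist_grid_round assms] by (simp_all add: rounding_cost_def)
  have "(\<integral>x. OPT - rounding_cost - ?round x - 2 * (L + \<delta>) * ?dev x \<partial>samples n) \<le> (\<integral>x. SC_opt n k x \<partial>samples n)"
  proof (rule integral_mono)
    show "OPT - rounding_cost - ?round x - 2 * (L + \<delta>) * ?dev x \<le> SC_opt n k x" for x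
      unfolding SC_opt_def by (rule cINF_greatest[OF UNIV_not_empty]) (rule SC_ge_grid[OF assms])
  qed (use integrable_dev integrable_round integrable_SC_opt in simp_all)
  moreover have "2 * (L + \<delta>) * (\<integral>x. ?dev x \<partial>samples n) \<le> 2 * (L + \<delta>) * (real (card grid_indices) / sqrt (real n))"
    using integral_dev L_pos \<delta>_pos by (intro mult_left_mono) auto
  ultimately show ?thesis
    using integrable_dev integrable_round integral_round by (simp add: S.prob_space)
qed

end

context kmedian
begin

lemma integral_SC_opt_tendsto: "(\<lambda>n. \<integral>x. SC_opt n k x \<partial>samples n) \<longlonglongrightarrow> OPT"
proof (rule order_tendstoI)
  fix a assume "OPT < a"
  then show "eventually (\<lambda>n. (\<integral>x. SC_opt n k x \<partial>samples n) < a) sequentially"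
    using integral_SC_opt_le_OPT by (intro always_eventually allI) (rule le_less_trans)
next
  fix a assume "a < OPT"
  define e where "e = (OPT - a) / 4"
  have e: "0 < e"
    using \<open>a < OPT\<close> by (simp add: e_def)
  obtain L where L: "0 < L" "(\<integral>t. tail_dev 0 L t \<partial>M) < e / 2"
    using tail_dev_small[of "e / 2"] e by auto
  interpret grid: kmedian_grid M k L "e / 2"
    using kmedian_axioms L e by (simp add: kmedian_grid_def kmedian_grid_axioms_def)
  define C where "C = 2 * (L + e / 2) * real (card grid.grid_indices)"
  have "(\<lambda>n. C / sqrt (real n)) \<longlonglongrightarrow> 0"
    by (intro tendsto_divide_0[OF tendsto_const] filterlim_at_top_imp_at_infinity
        filterlim_compose[OF sqrt_at_top filterlim_real_sequentially])
  then have "eventually (\<lambda>n. C / sqrt (real n) < e) sequentially"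
    using e by (rule order_tendstoD(2))
  with eventually_gt_at_top[of 0]
  show "eventually (\<lambda>n. a < (\<integral>x. SC_opt n k x \<partial>samples n)) sequentially"
  proof eventually_elim
    case (elim n)
    then have "OPT - 2 * grid.rounding_cost - C / sqrt (real n) \<le> (\<integral>x. SC_opt n k x \<partial>samples n)"
      using grid.integral_SC_opt_ge_grid[of n] by (simp add: C_def)
    moreover have "grid.rounding_cost < e"
      using grid.rounding_cost_le L(2) by simp
    ultimately show ?case
      using elim e_def \<open>a < OPT\<close> by argo
  qed
qed

end

section \<open>Quantiles of a measure with positive density\<close>

locale positive_density =
  fixes M :: "real measure" and \<rho> :: "real \<Rightarrow> real" and I :: "real set"
  assumes standing: "standing_assumptions M \<rho> I"
begin

sublocale prob_space M
  using standing unfolding standing_assumptions_def by blast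

lemma M_density: "M = density lborel (\<lambda>x. ennreal (\<rho> x))"
  and \<rho>_measurable[measurable]: "\<rho> \<in> borel_measurable borel"
  and is_interval_I: "is_interval I"
  and nonempty_interior_I: "interior I \<noteq> {}"
  and \<rho>_outside: "\<And>x. x \<notin> I \<Longrightarrow> \<rho> x = 0"
  and \<rho>_pos: "\<And>x. x \<in> interior I \<Longrightarrow> 0 < \<rho> x"
  using standing unfolding standing_assumptions_def by blast+

lemma sets_M[measurable_cong]: "sets M = sets borel"
  by (simp add: M_density)

lemma space_M[simp]: "space M = UNIV"
  by (simp add: M_density)

lemma real_distribution_M: "real_distribution M"
  by (simp add: real_distribution_def real_distribution_axioms_def prob_space_axioms sets_M)

interpretation real_distribution M
  by (rule real_distribution_M)

lemma emeasure_M: "A \<in> sets borel \<Longrightarrow> emeasure M A = (\<integral>\<^sup>+x. ennreal (\<rho> x) * indicator A x \<partial>lborel)"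
  unfolding M_density by (rule emeasure_density) auto

lemma measure_singleton: "measure M {x} = 0"
proof -
  have "AE y in lborel. y \<in> {x} \<longrightarrow> ennreal (\<rho> y) = 0"
    using AE_lborel_singleton[of x] by eventually_elim auto
  then have "{x} \<in> null_sets M"
    unfolding M_density by (subst null_sets_density_iff) auto
  then show ?thesis by (simp add: measure_def null_setsD1)
qed

lemma measure_outside_I:
  assumes "A \<in> sets borel" "A \<inter> I = {}"
  shows "measure M A = 0"
proof -
  have vanish: "ennreal (\<rho> x) * indicator A x = 0" for x
  proof (cases "x \<in> A")
    case True
    then have "x \<notin> I" using assms(2) by blast
    then show ?thesis by (simp add: \<rho>_outside)
  qed simp
  have "emeasure M A = (\<integral>\<^sup>+x. 0 \<partial>lborel)"
    unfolding emeasure_M[OF assms(1)] vanish by simp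
  then show ?thesis
    by (simp add: measure_def)
qed

lemma measure_inside_I_pos:
  assumes "a < b" "{a<..<b} \<subseteq> I"
  shows "0 < measure M {a<..<b}"
proof -
  have \<rho>_pos_ab: "0 < \<rho> x" if "x \<in> {a<..<b}" for x
    using that assms(2) \<rho>_pos interior_maximal[OF assms(2)] by auto
  have "emeasure M {a<..<b} \<noteq> 0"
  proof
    assume "emeasure M {a<..<b} = 0"
    then have "(\<integral>\<^sup>+x. ennreal (\<rho> x) * indicator {a<..<b} x \<partial>lborel) = 0"
      using emeasure_M[of "{a<..<b}"] by simp
    then have "AE x in lborel. ennreal (\<rho> x) * indicator {a<..<b} x = 0"
      by (subst (asm) nn_integral_0_iff_AE) auto
    then have "AE x in lborel. x \<notin> {a<..<b}"
      by eventually_elim (use \<rho>_pos_ab in \<open>force simp: indicator_def\<close>)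
    then have "emeasure lborel {a<..<b} = 0"
      by (subst (asm) AE_iff_measurable[of "{a<..<b}"]) auto
    then show False using assms(1) by simp
  qed
  then show ?thesis
    by (simp add: emeasure_eq_measure zero_less_measure_iff)
qed

lemma cdf_eq_library_cdf: "Distribution_Functions.cdf M = cdf M"
  by (simp add: fun_eq_iff Distribution_Functions.cdf_def Defs.cdf_def)

lemma isCont_cdf: "isCont (cdf M) x"
  using isCont_cdf[of x] measure_singleton by (simp add: cdf_eq_library_cdf)

lemma measure_Ioc_eq_cdf_diff: "x \<le> y \<Longrightarrow> measure M {x<..y} = cdf M y - cdf M x"
  using cdf_diff_eq[of x y] by (cases "x = y") (auto simp: cdf_eq_library_cdf)

lemma cdf_inv_le_iff:
  assumes "0 < t" "t < 1"
  shows "cdf_inv M t \<le> x \<longleftrightarrow> t \<le> cdf M x"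
proof -
  define S where "S = {x. t \<le> cdf M x}"
  have "eventually (\<lambda>x. t < cdf M x) at_top"
    using cdf_lim_at_top_prob assms by (intro order_tendstoD(1)) (auto simp: cdf_eq_library_cdf)
  then have S_nonempty: "S \<noteq> {}"
    by (auto simp: S_def eventually_at_top_linorder dest: less_imp_le)
  have "eventually (\<lambda>x. cdf M x < t) at_bot"
    using cdf_lim_at_bot assms by (intro order_tendstoD(2)) (auto simp: cdf_eq_library_cdf)
  then obtain x0 where x0: "\<And>x. x \<le> x0 \<Longrightarrow> cdf M x < t"
    by (auto simp: eventually_at_bot_linorder)
  have S_bdd: "bdd_below S"
  proof (rule bdd_belowI)
    fix x assume "x \<in> S"
    then show "x0 \<le> x"
      using x0[of x] by (force simp: S_def)
  qed
  have "closed S"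
    unfolding S_def using isCont_cdf
    by (intro closed_Collect_le continuous_on_const continuous_at_imp_continuous_on) auto
  then have "cdf_inv M t \<in> S"
    unfolding cdf_inv_def S_def[symmetric] using S_nonempty S_bdd by (rule closed_contains_Inf[rotated 2])
  moreover have "cdf M y \<le> cdf M z" if "y \<le> z" for y z
    unfolding Defs.cdf_def using that by (intro finite_measure_mono) auto
  ultimately have "t \<le> cdf M x" if "cdf_inv M t \<le> x"
    using that by (force simp: S_def)
  moreover have "cdf_inv M t \<le> x" if "t \<le> cdf M x"
    unfolding cdf_inv_def S_def[symmetric] using that by (intro cInf_lower[OF _ S_bdd]) (simp add: S_def)
  ultimately show ?thesis
    by blast
qed

lemma cdf_less_iff_less_cdf_inv:
  "0 < t \<Longrightarrow> t < 1 \<Longrightarrow> cdf M x < t \<longleftrightarrow> x < cdf_inv M t"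
  using cdf_inv_le_iff[of t x] by auto

lemma cdf_cdf_inv:
  assumes "0 < t" "t < 1"
  shows "cdf M (cdf_inv M t) = t"
proof (rule antisym)
  let ?Q = "cdf_inv M t"
  have "(\<lambda>m. 1 / real (Suc m)) \<longlonglongrightarrow> 0"
    using LIMSEQ_inverse_real_of_nat by (simp add: inverse_eq_divide)
  then have "(\<lambda>m. ?Q - 1 / Suc m) \<longlonglongrightarrow> ?Q"
    using tendsto_diff[OF tendsto_const[of ?Q]] by fastforce
  then have "(\<lambda>m. cdf M (?Q - 1 / Suc m)) \<longlonglongrightarrow> cdf M ?Q"
    by (rule isCont_tendsto_compose[OF isCont_cdf])
  moreover have "cdf M (?Q - 1 / Suc m) < t" for m
    using cdf_less_iff_less_cdf_inv[OF assms] by simp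
  ultimately show "cdf M ?Q \<le> t"
    by (intro LIMSEQ_le_const2[of _ "cdf M ?Q"]) (auto intro: less_imp_le)
  show "t \<le> cdf M ?Q"
    using cdf_inv_le_iff[OF assms, of ?Q] by simp
qed

lemma cdf_inv_mono: "0 < t \<Longrightarrow> t \<le> t' \<Longrightarrow> t' < 1 \<Longrightarrow> cdf_inv M t \<le> cdf_inv M t'"
  using cdf_inv_le_iff[of t "cdf_inv M t'"] cdf_cdf_inv[of t'] by simp

lemma cdf_inv_between_points_of_I:
  assumes "0 < t" "t < 1"
  obtains a b where "a \<in> I" "b \<in> I" "a \<le> cdf_inv M t" "cdf_inv M t < b"
proof -
  let ?Q = "cdf_inv M t"
  have F_Q: "cdf M ?Q = t"
    using cdf_cdf_inv[OF assms] .
  have "\<exists>a\<in>I. a \<le> ?Q"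
  proof (rule ccontr)
    assume "\<not> (\<exists>a\<in>I. a \<le> ?Q)"
    then have "cdf M ?Q = 0"
      unfolding Defs.cdf_def by (intro measure_outside_I) auto
    then show False using F_Q assms by simp
  qed
  moreover have "\<exists>b\<in>I. ?Q < b"
  proof (rule ccontr)
    assume "\<not> (\<exists>b\<in>I. ?Q < b)"
    then have "measure M {?Q<..} = 0"
      by (intro measure_outside_I) auto
    moreover have "measure M {?Q<..} = 1 - cdf M ?Q"
      using prob_compl[of "{..?Q}"] by (simp add: Defs.cdf_def Compl_eq_Diff_UNIV[symmetric])
    ultimately show False using F_Q assms by simp
  qed
  ultimately show ?thesis
    using that by blast
qed

text \<open>Since the density is positive inside the support interval, the quantile is unique.\<close>

lemma cdf_cdf_inv_plus:
  assumes "0 < t" "t < 1" "0 < e"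
  shows "t < cdf M (cdf_inv M t + e)"
proof -
  let ?Q = "cdf_inv M t"
  obtain a b where ab: "a \<in> I" "b \<in> I" "a \<le> ?Q" "?Q < b"
    using cdf_inv_between_points_of_I[OF assms(1,2)] .
  have "{?Q<..<min b (?Q + e)} \<subseteq> I"
  proof
    fix x assume "x \<in> {?Q<..<min b (?Q + e)}"
    then have "a \<le> x" "x \<le> b"
      using ab by auto
    then show "x \<in> I"
      using is_interval_I ab(1,2) unfolding is_interval_1 by blast
  qed
  then have "0 < measure M {?Q<..<min b (?Q + e)}"
    using ab assms(3) by (intro measure_inside_I_pos) auto
  also have "\<dots> \<le> measure M {?Q<..?Q + e}"
    by (intro finite_measure_mono) auto
  also have "\<dots> = cdf M (?Q + e) - t"
    using assms cdf_cdf_inv[OF assms(1,2)] by (simp add: measure_Ioc_eq_cdf_diff)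
  finally show ?thesis by simp
qed

lemma I_nonempty: "I \<noteq> {}"
  using nonempty_interior_I interior_subset by blast

lemma cdf_ext_Inf_I: "cdf_ext M (Inf (ereal ` I)) = 0"
proof (cases "Inf (ereal ` I)")
  case (real a)
  then have "a \<le> x" if "x \<in> I" for x
    using Inf_lower[of "ereal x" "ereal ` I"] that by auto
  then have "measure M {..<a} = 0"
    by (intro measure_outside_I) force+
  moreover have "measure M ({..<a} \<union> {a}) = measure M {..<a} + measure M {a}"
    by (rule finite_measure_Union) auto
  moreover have "{..<a} \<union> {a} = {..a}"
    by auto
  ultimately show ?thesis
    using real measure_singleton by (simp add: cdf_ext_def Defs.cdf_def)
next
  case PInf
  obtain x where "x \<in> I"
    using I_nonempty by blast
  then have "Inf (ereal ` I) \<le> ereal x"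
    by (intro Inf_lower) auto
  then show ?thesis
    using PInf by simp
qed (simp add: cdf_ext_def)

lemma cdf_ext_Sup_I: "cdf_ext M (Sup (ereal ` I)) = 1"
proof (cases "Sup (ereal ` I)")
  case (real b)
  then have "x \<le> b" if "x \<in> I" for x
    using Sup_upper[of "ereal x" "ereal ` I"] that by auto
  then have "measure M {b<..} = 0"
    by (intro measure_outside_I) force+
  moreover have "measure M {b<..} = 1 - measure M {..b}"
    using prob_compl[of "{..b}"] by (simp add: Compl_eq_Diff_UNIV[symmetric])
  ultimately show ?thesis
    using real by (simp add: cdf_ext_def Defs.cdf_def)
next
  case MInf
  obtain x where "x \<in> I"
    using I_nonempty by blast
  then have "ereal x \<le> Sup (ereal ` I)"
    by (intro Sup_upper) auto
  then show ?thesis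
    using MInf by simp
qed (simp add: cdf_ext_def)

end

section \<open>Consistency of sample quantiles\<close>

definition sample_rank :: "real \<Rightarrow> nat \<Rightarrow> nat" where
  "sample_rank t n = nat \<lfloor>real (n - 1) * t\<rfloor>"

locale sample_quantile = finite_mean +
  fixes t Q :: real
  assumes t_pos: "0 < t" and t_less_1: "t < 1"
    and cdf_below: "\<And>e. 0 < e \<Longrightarrow> cdf M (Q - e) < t"
    and cdf_above: "\<And>e. 0 < e \<Longrightarrow> t < cdf M (Q + e)"
begin

lemma sample_rank_bounds:
  assumes "1 \<le> n"
  shows "sample_rank t n < n" "real (sample_rank t n) \<le> (real n - 1) * t" "(real n - 1) * t < real (sample_rank t n) + 1"
proof -
  have "0 \<le> (real n - 1) * t"
    using assms t_pos by simp
  then have rank_eq: "real (sample_rank t n) = real_of_int \<lfloor>(real n - 1) * t\<rfloor>"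
    using assms by (simp add: sample_rank_def of_nat_diff)
  then show "real (sample_rank t n) \<le> (real n - 1) * t" "(real n - 1) * t < real (sample_rank t n) + 1"
    by linarith+
  have "(real n - 1) * t \<le> real n - 1"
    using assms t_less_1 \<open>0 \<le> (real n - 1) * t\<close> by (simp add: mult_left_le)
  then show "sample_rank t n < n"
    using rank_eq by linarith
qed

lemma sum_indicator_eq_empirical_freq:
  "0 < n \<Longrightarrow> (\<Sum>i<n. indicator A (x i)) = real n * empirical_freq n A x"
  by (simp add: empirical_freq_def)

lemma prob_atMost: "prob {..c} = cdf M c"
  by (simp add: Defs.cdf_def)

text \<open>The order statistic of rank \<open>\<approx> t n\<close> exceeds \<open>Q\<close> by \<open>d\<close> only if \<open>(1 - t) n\<close> sample points
  do, and falls below \<open>Q\<close> by \<open>d\<close> only if \<open>t n / 2\<close> sample points do.\<close>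

lemma abs_order_stat_rank_le:
  assumes n: "2 \<le> n"
  shows "\<bar>order_stat n (sample_rank t n) x - Q\<bar> \<le> (1 / (1 - t) + 2 / t) * ((1 / real n) * (\<Sum>i<n. \<bar>x i - Q\<bar>))"
proof -
  define m where "m = sample_rank t n"
  define S where "S = (\<Sum>i<n. \<bar>x i - Q\<bar>)"
  define y where "y = order_stat n m x"
  have m: "m < n" "real m \<le> (real n - 1) * t" "(real n - 1) * t < real m + 1"
    using sample_rank_bounds[of n] n unfolding m_def by auto
  have "real (n - m) * max 0 (y - Q) \<le> (\<Sum>i<n. max 0 (x i - Q))"
    unfolding y_def by (rule order_stat_mono_sum[OF m(1)]) (auto intro!: monoI)
  also have "\<dots> \<le> S"
    unfolding S_def by (intro sum_mono) auto
  finally have above: "real (n - m) * max 0 (y - Q) \<le> S" .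
  have "real (Suc m) * max 0 (Q - y) \<le> (\<Sum>i<n. max 0 (Q - x i))"
    unfolding y_def by (rule order_stat_antimono_sum[OF m(1)]) (auto intro!: antimonoI)
  also have "\<dots> \<le> S"
    unfolding S_def by (intro sum_mono) auto
  finally have below: "real (Suc m) * max 0 (Q - y) \<le> S" .
  have "real n * (1 - t) \<le> real (n - m)"
    using m t_pos by (simp add: of_nat_diff algebra_simps)
  then have "real n * (1 - t) * max 0 (y - Q) \<le> S"
    using above by (meson max.cobounded1 mult_right_mono order_trans)
  moreover have "0 < real n * (1 - t)"
    using n t_less_1 by simp
  ultimately have up: "max 0 (y - Q) \<le> S / (real n * (1 - t))"
    by (metis pos_le_divide_eq mult.commute)
  have "real n * t / 2 \<le> real (Suc m)"
    using m n t_pos t_less_1 by (simp add: field_simps)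
  then have "real n * t / 2 * max 0 (Q - y) \<le> S"
    using below by (meson max.cobounded1 mult_right_mono order_trans)
  moreover have "0 < real n * t / 2"
    using n t_pos by simp
  ultimately have down: "max 0 (Q - y) \<le> S / (real n * t / 2)"
    by (metis pos_le_divide_eq mult.commute)
  have "\<bar>y - Q\<bar> = max 0 (y - Q) + max 0 (Q - y)"
    by (simp add: abs_if max_def)
  also have "\<dots> \<le> S / (real n * (1 - t)) + S / (real n * t / 2)"
    using up down by (rule add_mono)
  also have "\<dots> = (1 / (1 - t) + 2 / t) * ((1 / real n) * S)"
    using n t_pos t_less_1 by (simp add: field_simps)
  finally show ?thesis
    unfolding y_def m_def S_def .
qed

lemma order_stat_above_imp_freq_dev:
  assumes e: "0 < e" and n: "1 \<le> n" and large: "2 * (1 - t) / (cdf M (Q + e) - t) \<le> real n"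
    and above: "Q + e < order_stat n (sample_rank t n) x"
  shows "(cdf M (Q + e) - t) / 2 < cdf M (Q + e) - empirical_freq n {..Q + e} x"
proof -
  define a where "a = cdf M (Q + e)"
  have "t < a" unfolding a_def using cdf_above[OF e] .
  have "real n * empirical_freq n {..Q + e} x < real (Suc (sample_rank t n))"
    using above order_stat_le_iff[OF sample_rank_bounds(1)[OF n], of x "Q + e"] n
    by (simp add: sum_indicator_eq_empirical_freq)
  also have "\<dots> \<le> real n * t + (1 - t)"
    using sample_rank_bounds(2)[OF n] by (simp add: algebra_simps)
  also have "1 - t \<le> real n * (a - t) / 2"
    using large \<open>t < a\<close> unfolding a_def[symmetric] by (simp add: pos_divide_le_eq mult.commute)
  finally have "real n * empirical_freq n {..Q + e} x < real n * (t + (a - t) / 2)"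
    by (simp add: algebra_simps)
  then have "empirical_freq n {..Q + e} x < t + (a - t) / 2"
    using n by simp
  then show ?thesis
    unfolding a_def[symmetric] by (simp add: field_simps)
qed

lemma order_stat_below_imp_freq_dev:
  assumes e: "0 < e" and n: "1 \<le> n" and large: "2 * t / (t - cdf M (Q - e)) \<le> real n"
    and below: "order_stat n (sample_rank t n) x < Q - e"
  shows "(t - cdf M (Q - e)) / 2 < empirical_freq n {..Q - e} x - cdf M (Q - e)"
proof -
  define b where "b = cdf M (Q - e)"
  have "b < t" unfolding b_def using cdf_below[OF e] .
  have "real n * t - t < real (Suc (sample_rank t n))"
    using sample_rank_bounds(3)[OF n] by (simp add: algebra_simps)
  also have "real (Suc (sample_rank t n)) \<le> real n * empirical_freq n {..Q - e} x"
    using below order_stat_le_iff[OF sample_rank_bounds(1)[OF n], of x "Q - e"] n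
    by (simp add: sum_indicator_eq_empirical_freq)
  finally have "real n * t - t < real n * empirical_freq n {..Q - e} x" .
  moreover have "t \<le> real n * (t - b) / 2"
    using large \<open>b < t\<close> unfolding b_def[symmetric] by (simp add: pos_divide_le_eq mult.commute)
  moreover have "real n * (t - (t - b) / 2) = real n * t - real n * (t - b) / 2"
    by (simp add: algebra_simps)
  ultimately have "real n * (t - (t - b) / 2) < real n * empirical_freq n {..Q - e} x"
    by linarith
  then have "t - (t - b) / 2 < empirical_freq n {..Q - e} x"
    using n by simp
  then show ?thesis
    unfolding b_def[symmetric] by (simp add: field_simps)
qed

text \<open>A Chebyshev-type majorant of the indicator of the event that the order statistic is more
  than \<open>e\<close> away from \<open>Q\<close>.\<close>

definition far_majorant :: "real \<Rightarrow> nat \<Rightarrow> (nat \<Rightarrow> real) \<Rightarrow> real" where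
  "far_majorant e n x =
     4 * (empirical_freq n {..Q + e} x - cdf M (Q + e))\<^sup>2 / (cdf M (Q + e) - t)\<^sup>2
   + 4 * (empirical_freq n {..Q - e} x - cdf M (Q - e))\<^sup>2 / (t - cdf M (Q - e))\<^sup>2"

lemma far_majorant_nonneg: "0 \<le> far_majorant e n x"
  unfolding far_majorant_def by simp

lemma one_le_far_majorant:
  assumes e: "0 < e" and n: "1 \<le> n"
    and large: "2 * (1 - t) / (cdf M (Q + e) - t) \<le> real n" "2 * t / (t - cdf M (Q - e)) \<le> real n"
    and far: "e < \<bar>order_stat n (sample_rank t n) x - Q\<bar>"
  shows "1 \<le> far_majorant e n x"
proof -
  have one_le: "1 \<le> 4 * z\<^sup>2 / d\<^sup>2" if "0 < d" "d / 2 < \<bar>z\<bar>" for z d :: real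
  proof -
    have "(d / 2)\<^sup>2 \<le> \<bar>z\<bar>\<^sup>2"
      using that by (intro power_mono) auto
    then show ?thesis
      using that(1) by (simp add: power_divide le_divide_eq)
  qed
  have gaps: "0 < cdf M (Q + e) - t" "0 < t - cdf M (Q - e)"
    using cdf_above[OF e] cdf_below[OF e] by simp_all
  consider "Q + e < order_stat n (sample_rank t n) x" | "order_stat n (sample_rank t n) x < Q - e"
    using far by (auto simp: abs_if split: if_splits)
  then show ?thesis
  proof cases
    case 1
    then have "(cdf M (Q + e) - t) / 2 < cdf M (Q + e) - empirical_freq n {..Q + e} x"
      by (rule order_stat_above_imp_freq_dev[OF e n large(1)])
    then have "1 \<le> 4 * (empirical_freq n {..Q + e} x - cdf M (Q + e))\<^sup>2 / (cdf M (Q + e) - t)\<^sup>2"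
      using gaps abs_ge_minus_self[of "empirical_freq n {..Q + e} x - cdf M (Q + e)"]
      by (intro one_le) linarith+
    then show ?thesis
      unfolding far_majorant_def by (simp add: add_increasing2)
  next
    case 2
    then have "(t - cdf M (Q - e)) / 2 < empirical_freq n {..Q - e} x - cdf M (Q - e)"
      by (rule order_stat_below_imp_freq_dev[OF e n large(2)])
    then have "1 \<le> 4 * (empirical_freq n {..Q - e} x - cdf M (Q - e))\<^sup>2 / (t - cdf M (Q - e))\<^sup>2"
      using gaps abs_ge_self[of "empirical_freq n {..Q - e} x - cdf M (Q - e)"]
      by (intro one_le) linarith+
    then show ?thesis
      unfolding far_majorant_def by (simp add: add_increasing)
  qed
qed

lemma integral_far_majorant:
  assumes "1 \<le> n"
  shows "integrable (samples n) (far_majorant e n)"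
    and "(\<integral>x. far_majorant e n x \<partial>samples n)
      \<le> (4 / (cdf M (Q + e) - t)\<^sup>2 + 4 / (t - cdf M (Q - e))\<^sup>2) / real n"
proof -
  have n: "0 < n" using assms by simp
  note dev_plus = integral_empirical_freq_square_dev[of "{..Q + e}" n, unfolded prob_atMost]
  note dev_minus = integral_empirical_freq_square_dev[of "{..Q - e}" n, unfolded prob_atMost]
  have majorant_eq: "far_majorant e n x
      = 4 / (cdf M (Q + e) - t)\<^sup>2 * (empirical_freq n {..Q + e} x - cdf M (Q + e))\<^sup>2
      + 4 / (t - cdf M (Q - e))\<^sup>2 * (empirical_freq n {..Q - e} x - cdf M (Q - e))\<^sup>2" for x
    unfolding far_majorant_def by simp
  show "integrable (samples n) (far_majorant e n)"
    unfolding majorant_eq[abs_def] using dev_plus(1) dev_minus(1) n by (simp add: sets_M)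
  have "(\<integral>x. far_majorant e n x \<partial>samples n)
      = 4 / (cdf M (Q + e) - t)\<^sup>2 * (\<integral>x. (empirical_freq n {..Q + e} x - cdf M (Q + e))\<^sup>2 \<partial>samples n)
      + 4 / (t - cdf M (Q - e))\<^sup>2 * (\<integral>x. (empirical_freq n {..Q - e} x - cdf M (Q - e))\<^sup>2 \<partial>samples n)"
    unfolding majorant_eq using dev_plus(1) dev_minus(1) n by (simp add: sets_M)
  also have "\<dots> \<le> 4 / (cdf M (Q + e) - t)\<^sup>2 * (1 / real n) + 4 / (t - cdf M (Q - e))\<^sup>2 * (1 / real n)"
    using dev_plus(2) dev_minus(2) n by (intro add_mono mult_left_mono) (simp_all add: sets_M)
  finally show "(\<integral>x. far_majorant e n x \<partial>samples n)
      \<le> (4 / (cdf M (Q + e) - t)\<^sup>2 + 4 / (t - cdf M (Q - e))\<^sup>2) / real n"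
    by (simp add: add_divide_distrib)
qed

lemma abs_order_stat_rank_le_majorant:
  assumes e: "0 < e" and n: "2 \<le> n" and K: "0 \<le> K"
    and large: "2 * (1 - t) / (cdf M (Q + e) - t) \<le> real n" "2 * t / (t - cdf M (Q - e)) \<le> real n"
  shows "\<bar>order_stat n (sample_rank t n) x - Q\<bar>
    \<le> e + (1 / (1 - t) + 2 / t) * (K * far_majorant e n x + (1 / real n) * (\<Sum>i<n. tail_dev Q K (x i)))"
proof -
  let ?C = "1 / (1 - t) + 2 / t"
  have C_pos: "0 < ?C"
    using t_pos t_less_1 by (simp add: add_pos_pos)
  have tail_nonneg: "0 \<le> (1 / real n) * (\<Sum>i<n. tail_dev Q K (x i))"
    by (simp add: sum_nonneg tail_dev_nonneg)
  show ?thesis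
  proof (cases "e < \<bar>order_stat n (sample_rank t n) x - Q\<bar>")
    case True
    have "(1 / real n) * (\<Sum>i<n. \<bar>x i - Q\<bar>) \<le> (1 / real n) * (\<Sum>i<n. K + tail_dev Q K (x i))"
      using abs_le_tail_dev[OF K] by (intro mult_left_mono sum_mono) auto
    also have "\<dots> = K + (1 / real n) * (\<Sum>i<n. tail_dev Q K (x i))"
      using n by (simp add: sum.distrib field_simps)
    also have "\<dots> \<le> K * far_majorant e n x + (1 / real n) * (\<Sum>i<n. tail_dev Q K (x i))"
      using one_le_far_majorant[OF e _ large True] n K by (simp add: mult_le_cancel_left1)
    finally have "?C * ((1 / real n) * (\<Sum>i<n. \<bar>x i - Q\<bar>))
        \<le> ?C * (K * far_majorant e n x + (1 / real n) * (\<Sum>i<n. tail_dev Q K (x i)))"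
      using C_pos by (intro mult_left_mono) auto
    then show ?thesis
      using abs_order_stat_rank_le[OF n, of x] e by linarith
  next
    case False
    moreover have "0 \<le> ?C * (K * far_majorant e n x + (1 / real n) * (\<Sum>i<n. tail_dev Q K (x i)))"
      by (intro mult_nonneg_nonneg add_nonneg_nonneg less_imp_le[OF C_pos] K far_majorant_nonneg tail_nonneg)
    ultimately show ?thesis
      by linarith
  qed
qed

lemma integrable_abs_order_stat_dev:
  assumes "m < n"
  shows "integrable (samples n) (\<lambda>x. \<bar>order_stat n m x - Q\<bar>)"
proof -
  interpret S: prob_space "samples n" by (rule prob_space_samples)
  show ?thesis
  proof (rule Bochner_Integration.integrable_bound)
    show "integrable (samples n) (\<lambda>x. (\<Sum>i<n. \<bar>x i\<bar>) + \<bar>Q\<bar>)"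
      using integrable_sample[OF integrable_abs] by (intro Bochner_Integration.integrable_add integrable_sum) auto
    show "(\<lambda>x. \<bar>order_stat n m x - Q\<bar>) \<in> borel_measurable (samples n)"
      using borel_measurable_order_stat[OF assms, of "samples n"] by measurable
    show "AE x in samples n. norm \<bar>order_stat n m x - Q\<bar> \<le> norm ((\<Sum>i<n. \<bar>x i\<bar>) + \<bar>Q\<bar>)"
      using abs_order_stat_le[OF assms] by (intro AE_I2) (simp add: sum_nonneg abs_le_iff, smt (verit))
  qed
qed

lemma integral_abs_order_stat_rank_le:
  assumes e: "0 < e" and n: "2 \<le> n" and K: "0 \<le> K"
    and large: "2 * (1 - t) / (cdf M (Q + e) - t) \<le> real n" "2 * t / (t - cdf M (Q - e)) \<le> real n"
  shows "(\<integral>x. \<bar>order_stat n (sample_rank t n) x - Q\<bar> \<partial>samples n)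
    \<le> e + (1 / (1 - t) + 2 / t) * (K * ((4 / (cdf M (Q + e) - t)\<^sup>2 + 4 / (t - cdf M (Q - e))\<^sup>2) / real n)
        + (\<integral>u. tail_dev Q K u \<partial>M))"
proof -
  interpret S: prob_space "samples n" by (rule prob_space_samples)
  let ?C = "1 / (1 - t) + 2 / t"
  have n1: "1 \<le> n" using n by simp
  note majorant = integral_far_majorant[OF n1, of e]
  have integrable_tail: "integrable (samples n) (\<lambda>x. (1 / real n) * (\<Sum>i<n. tail_dev Q K (x i)))"
    by (rule integrable_sample_mean[OF integrable_tail_dev])
  have "(\<integral>x. \<bar>order_stat n (sample_rank t n) x - Q\<bar> \<partial>samples n)
      \<le> (\<integral>x. e + ?C * (K * far_majorant e n x + (1 / real n) * (\<Sum>i<n. tail_dev Q K (x i))) \<partial>samples n)"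
    using abs_order_stat_rank_le_majorant[OF e n K large]
      integrable_abs_order_stat_dev[OF sample_rank_bounds(1)[OF n1]] majorant(1) integrable_tail
    by (intro integral_mono) auto
  also have "\<dots> = e + ?C * (K * (\<integral>x. far_majorant e n x \<partial>samples n) + (\<integral>u. tail_dev Q K u \<partial>M))"
    using majorant(1) integrable_tail integral_sample_mean[OF integrable_tail_dev] n
    by (simp add: S.prob_space)
  also have "\<dots> \<le> e + ?C * (K * ((4 / (cdf M (Q + e) - t)\<^sup>2 + 4 / (t - cdf M (Q - e))\<^sup>2) / real n)
      + (\<integral>u. tail_dev Q K u \<partial>M))"
    using majorant(2) K t_pos t_less_1 by (intro add_left_mono mult_left_mono add_right_mono) auto
  finally show ?thesis .
qed

theorem integral_abs_order_stat_tendsto: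
  "(\<lambda>n. \<integral>x. \<bar>order_stat n (sample_rank t n) x - Q\<bar> \<partial>samples n) \<longlonglongrightarrow> 0"
proof (rule order_tendstoI)
  fix a :: real assume "a < 0"
  then show "eventually (\<lambda>n. a < (\<integral>x. \<bar>order_stat n (sample_rank t n) x - Q\<bar> \<partial>samples n)) sequentially"
    by (intro always_eventually allI) (simp add: less_le_trans)
next
  fix a :: real assume "0 < a"
  define C where "C = 1 / (1 - t) + 2 / t"
  have C_pos: "0 < C"
    using t_pos t_less_1 by (simp add: C_def add_pos_pos)
  define e where "e = a / 3"
  have e: "0 < e"
    using \<open>0 < a\<close> by (simp add: e_def)
  obtain K where K: "0 < K" "(\<integral>u. tail_dev Q K u \<partial>M) < e / C"
    using tail_dev_small[of "e / C" Q] e C_pos by auto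
  define A where "A = 4 / (cdf M (Q + e) - t)\<^sup>2 + 4 / (t - cdf M (Q - e))\<^sup>2"
  have large: "eventually (\<lambda>n. c \<le> real n) sequentially" for c
    using filterlim_real_sequentially by (simp add: filterlim_at_top)
  have "eventually (\<lambda>n. 2 \<le> real n) sequentially"
    "eventually (\<lambda>n. 2 * (1 - t) / (cdf M (Q + e) - t) \<le> real n) sequentially"
    "eventually (\<lambda>n. 2 * t / (t - cdf M (Q - e)) \<le> real n) sequentially"
    "eventually (\<lambda>n. C * K * A / e \<le> real n) sequentially"
    by (fact large)+
  then show "eventually (\<lambda>n. (\<integral>x. \<bar>order_stat n (sample_rank t n) x - Q\<bar> \<partial>samples n) < a) sequentially"
  proof eventually_elim
    case (elim n)
    then have n: "2 \<le> n"
      by linarith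
    have "C * (K * (A / real n)) \<le> e"
      using elim(4) e n by (simp add: pos_divide_le_eq mult_ac)
    moreover have "C * (\<integral>u. tail_dev Q K u \<partial>M) < e"
      using K(2) C_pos by (simp add: pos_less_divide_eq mult.commute)
    moreover have "(\<integral>x. \<bar>order_stat n (sample_rank t n) x - Q\<bar> \<partial>samples n)
        \<le> e + C * (K * (A / real n) + (\<integral>u. tail_dev Q K u \<partial>M))"
      using integral_abs_order_stat_rank_le[OF e n less_imp_le[OF K(1)] elim(2,3)]
      unfolding C_def A_def .
    ultimately show ?case
      unfolding distrib_left e_def by linarith
  qed
qed

end

section \<open>The percentile mechanism\<close>

locale percentile_mechanism = kmedian M k + density: positive_density M \<rho> I
  for M :: "real measure" and k :: nat and \<rho> :: "real \<Rightarrow> real" and I :: "real set" +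
  fixes v :: "nat \<Rightarrow> real"
  assumes percentile: "percentile_vector k v"
    and v_bounds: "\<forall>j<k. 0 < v j \<and> v j < 1"
begin

definition quantile :: "nat \<Rightarrow> real" where
  "quantile j = cdf_inv M (v j)"

definition midpoint :: "nat \<Rightarrow> real" where
  "midpoint j = (quantile (j - 1) + quantile j) / 2"

text \<open>\<open>first_cells j\<close> is the union of the Voronoi cells of the first \<open>j\<close> quantiles; its boundary
  is the point \<open>z\<^sub>j\<close> of the definition of \<open>nu_Q\<close>.\<close>

definition first_cells :: "nat \<Rightarrow> real set" where
  "first_cells j = (if j = 0 then {} else if j < k then {..midpoint j} else UNIV)"

definition quantile_cell :: "real \<Rightarrow> nat" where
  "quantile_cell x = (LEAST j. x \<in> first_cells (Suc j))"

lemma v_mono: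
  assumes "i \<le> j" "j < k"
  shows "v i \<le> v j"
  using assms
proof (induction rule: dec_induct)
  case (step n)
  then have "v n \<le> v (Suc n)"
    using percentile unfolding percentile_vector_def by simp
  then show ?case
    using step by simp
qed simp

lemma quantile_mono: "i \<le> j \<Longrightarrow> j < k \<Longrightarrow> quantile i \<le> quantile j"
  unfolding quantile_def using v_bounds v_mono by (intro density.cdf_inv_mono) auto

lemma midpoint_mono:
  assumes "1 \<le> i" "i \<le> j" "j < k"
  shows "midpoint i \<le> midpoint j"
proof -
  have "quantile (i - 1) \<le> quantile (j - 1)" "quantile i \<le> quantile j"
    using assms by (simp_all add: quantile_mono)
  then show ?thesis
    unfolding midpoint_def by simp
qed

lemma first_cells_in_sets[measurable]: "first_cells j \<in> sets borel"
  unfolding first_cells_def by simp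

lemma first_cells_mono: "i \<le> j \<Longrightarrow> first_cells i \<subseteq> first_cells j"
  unfolding first_cells_def using midpoint_mono[of i j] by auto

lemma quantile_cell_iff: "quantile_cell x = j \<longleftrightarrow> j < k \<and> x \<in> first_cells (Suc j) - first_cells j"
proof -
  have "x \<in> first_cells k"
    using k_pos by (simp add: first_cells_def)
  then have ex: "x \<in> first_cells (Suc (k - 1))"
    using k_pos by simp
  have less_k: "quantile_cell x < k"
    using Least_le[of "\<lambda>j. x \<in> first_cells (Suc j)", OF ex] k_pos unfolding quantile_cell_def by simp
  have "x \<in> first_cells (Suc (quantile_cell x))"
    unfolding quantile_cell_def using ex by (rule LeastI)
  moreover have "x \<notin> first_cells (quantile_cell x)"
  proof (cases "quantile_cell x")
    case (Suc m)
    then have "m < quantile_cell x"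
      by simp
    then have "x \<notin> first_cells (Suc m)"
      unfolding quantile_cell_def by (rule not_less_Least)
    then show ?thesis
      using Suc by simp
  qed (simp add: first_cells_def)
  moreover have "quantile_cell x = j" if "x \<in> first_cells (Suc j) - first_cells j" for j
  proof (rule antisym)
    show "quantile_cell x \<le> j"
      unfolding quantile_cell_def using that by (intro Least_le) auto
    show "j \<le> quantile_cell x"
      using first_cells_mono[of "Suc (quantile_cell x)" j] that \<open>x \<in> first_cells (Suc (quantile_cell x))\<close>
      by (metis DiffE not_less_eq_eq subsetD)
  qed
  ultimately show ?thesis
    using less_k by blast
qed

lemma measurable_quantile_cell[measurable]: "quantile_cell \<in> borel \<rightarrow>\<^sub>M count_space UNIV"
  unfolding quantile_cell_def by measurable

lemma center_dist_quantile: "center_dist k quantile x = \<bar>x - quantile (quantile_cell x)\<bar>"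
proof -
  define j where "j = quantile_cell x"
  have j: "j < k" "x \<in> first_cells (Suc j)" "x \<notin> first_cells j"
    using quantile_cell_iff[of x j] unfolding j_def by auto
  have "\<bar>x - quantile j\<bar> \<le> \<bar>x - quantile i\<bar>" if i: "i < k" for i
  proof (cases i j rule: linorder_cases)
    case less
    then have "midpoint j < x"
      using j by (auto simp: first_cells_def split: if_splits)
    moreover have "quantile i \<le> quantile (j - 1)" "quantile i \<le> quantile j"
      using less j by (auto intro: quantile_mono)
    ultimately show ?thesis
      unfolding midpoint_def by (auto simp: abs_if field_simps)
  next
    case greater
    then have "x \<le> midpoint (Suc j)"
      using j i by (auto simp: first_cells_def split: if_splits)
    moreover have "quantile (Suc j) \<le> quantile i" "quantile j \<le> quantile i"
      using greater i by (auto intro: quantile_mono)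
    ultimately show ?thesis
      unfolding midpoint_def by (auto simp: abs_if field_simps)
  qed simp
  then show ?thesis
    unfolding j_def[symmetric] using j(1) by (intro antisym center_dist_le center_dist_greatest[OF k_pos])
qed

lemma measure_first_cells:
  assumes "j \<le> k"
  shows "measure M (first_cells j)
    = cdf_ext M (if j = 0 then Inf (ereal ` I) else if j = k then Sup (ereal ` I) else ereal (midpoint j))"
  using assms density.cdf_ext_Inf_I density.cdf_ext_Sup_I k_pos
  by (auto simp: first_cells_def cdf_ext_def Defs.cdf_def)

lemma nu_Q_eq: "nu_Q M I k v = discrete_measure k (\<lambda>j. measure M {x. quantile_cell x = j}) quantile"
proof -
  have "measure M {x. quantile_cell x = j} = measure M (first_cells (Suc j)) - measure M (first_cells j)"
    if "j < k" for j
  proof -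
    have "{x. quantile_cell x = j} = first_cells (Suc j) - first_cells j"
      using quantile_cell_iff that by auto
    then show ?thesis
      using first_cells_mono[of j "Suc j"] by (simp add: finite_measure_Diff sets_M)
  qed
  then show ?thesis
    unfolding nu_Q_def Let_def quantile_def[symmetric] midpoint_def[symmetric]
    by (intro discrete_measure_cong) (simp add: measure_first_cells)
qed

lemma W1_nu_Q: "W1 M (nu_Q M I k v) = ennreal (cost quantile)"
  unfolding nu_Q_eq using quantile_cell_iff center_dist_quantile
  by (intro W1_cell_measure measurable_quantile_cell) auto

lemma sample_quantile: "j < k \<Longrightarrow> sample_quantile M (v j) (quantile j)"
  unfolding sample_quantile_def sample_quantile_axioms_def quantile_def
  using finite_mean_axioms v_bounds density.cdf_cdf_inv density.cdf_cdf_inv_plus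
    density.cdf_less_iff_less_cdf_inv[of "v j" "cdf_inv M (v j) - _"]
  by auto

lemma PM_eq_order_stat: "PM n k v x j = order_stat n (sample_rank (v j) n) x"
  by (simp add: PM_def order_stat_def sample_rank_def)

definition percentile_dev :: "nat \<Rightarrow> (nat \<Rightarrow> real) \<Rightarrow> real" where
  "percentile_dev n x = (\<Sum>j<k. \<bar>order_stat n (sample_rank (v j) n) x - quantile j\<bar>)"

lemma abs_SC_PM_diff_le: "\<bar>SC_PM n k v x - SC n k x quantile\<bar> \<le> percentile_dev n x"
proof -
  have dev: "\<bar>order_stat n (sample_rank (v j) n) x - quantile j\<bar> \<le> percentile_dev n x" if "j < k" for j
    unfolding percentile_dev_def using that
    by (intro member_le_sum[where f="\<lambda>j. \<bar>order_stat n (sample_rank (v j) n) x - quantile j\<bar>"]) auto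
  have "SC n k x (\<lambda>j. order_stat n (sample_rank (v j) n) x) \<le> SC n k x quantile + percentile_dev n x"
    using dev by (intro SC_perturb_centers[OF k_pos])
  moreover have "SC n k x quantile \<le> SC n k x (\<lambda>j. order_stat n (sample_rank (v j) n) x) + percentile_dev n x"
    using dev by (intro SC_perturb_centers[OF k_pos]) (simp add: abs_minus_commute)
  ultimately show ?thesis
    unfolding SC_PM_def PM_eq_order_stat by linarith
qed

lemma integrable_abs_order_stat_quantile_dev:
  "j < k \<Longrightarrow> 1 \<le> n \<Longrightarrow> integrable (samples n) (\<lambda>x. \<bar>order_stat n (sample_rank (v j) n) x - quantile j\<bar>)"
  using sample_quantile.integrable_abs_order_stat_dev[OF sample_quantile sample_quantile.sample_rank_bounds(1)[OF sample_quantile]]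
  by blast

lemma integrable_percentile_dev: "1 \<le> n \<Longrightarrow> integrable (samples n) (percentile_dev n)"
  unfolding percentile_dev_def[abs_def]
  by (intro Bochner_Integration.integrable_sum integrable_abs_order_stat_quantile_dev) auto

lemma integral_percentile_dev_tendsto: "(\<lambda>n. \<integral>x. percentile_dev n x \<partial>samples n) \<longlonglongrightarrow> 0"
proof -
  have "(\<lambda>n. \<Sum>j<k. \<integral>x. \<bar>order_stat n (sample_rank (v j) n) x - quantile j\<bar> \<partial>samples n) \<longlonglongrightarrow> 0"
    using sample_quantile.integral_abs_order_stat_tendsto[OF sample_quantile] by (intro tendsto_null_sum) auto
  moreover have "eventually (\<lambda>n. (\<Sum>j<k. \<integral>x. \<bar>order_stat n (sample_rank (v j) n) x - quantile j\<bar> \<partial>samples n)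
      = (\<integral>x. percentile_dev n x \<partial>samples n)) sequentially"
    using eventually_ge_at_top[of 1] unfolding percentile_dev_def
    by eventually_elim (intro Bochner_Integration.integral_sum[symmetric] integrable_abs_order_stat_quantile_dev; simp)
  ultimately show ?thesis
    by (rule Lim_transform_eventually)
qed

lemma integrable_SC_PM:
  assumes "1 \<le> n"
  shows "integrable (samples n) (\<lambda>x. SC_PM n k v x)"
proof (rule Bochner_Integration.integrable_bound)
  show "integrable (samples n) (\<lambda>x. SC n k x quantile + percentile_dev n x)"
    using integrable_SC integrable_percentile_dev[OF assms] by simp
  have "order_stat n (sample_rank (v j) n) \<in> borel_measurable (samples n)" if "j < k" for j
    using sample_quantile.sample_rank_bounds(1)[OF sample_quantile[OF that] assms]
    by (rule borel_measurable_order_stat) (simp add: measurable_cong_sets[OF refl sets_M, symmetric])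
  then show "(\<lambda>x. SC_PM n k v x) \<in> borel_measurable (samples n)"
    unfolding SC_PM_def PM_eq_order_stat SC_eq_center_dist center_dist_def
    by (intro borel_measurable_times borel_measurable_const borel_measurable_sum borel_measurable_Min
        borel_measurable_abs borel_measurable_diff) (auto simp: measurable_cong_sets[OF refl sets_M, symmetric])
  show "AE x in samples n. norm (SC_PM n k v x) \<le> norm (SC n k x quantile + percentile_dev n x)"
  proof (intro AE_I2)
    fix x
    have "SC_PM n k v x \<le> SC n k x quantile + percentile_dev n x"
      using abs_le_D1[OF abs_SC_PM_diff_le[of n x]] by linarith
    moreover have "0 \<le> SC_PM n k v x"
      unfolding SC_PM_def by (rule SC_nonneg[OF k_pos])
    ultimately show "norm (SC_PM n k v x) \<le> norm (SC n k x quantile + percentile_dev n x)"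
      by simp
  qed
qed

lemma integral_SC_PM_tendsto: "(\<lambda>n. \<integral>x. SC_PM n k v x \<partial>samples n) \<longlonglongrightarrow> cost quantile"
proof -
  have "eventually (\<lambda>n. \<bar>(\<integral>x. SC_PM n k v x \<partial>samples n) - cost quantile\<bar>
      \<le> (\<integral>x. percentile_dev n x \<partial>samples n)) sequentially"
    using eventually_ge_at_top[of 1]
  proof eventually_elim
    case (elim n)
    have "\<bar>(\<integral>x. SC_PM n k v x \<partial>samples n) - cost quantile\<bar> = \<bar>\<integral>x. SC_PM n k v x - SC n k x quantile \<partial>samples n\<bar>"
      using integrable_SC_PM[OF elim] integrable_SC integral_SC[of n quantile] elim by simp
    also have "\<dots> \<le> (\<integral>x. \<bar>SC_PM n k v x - SC n k x quantile\<bar> \<partial>samples n)"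
      by (rule integral_abs_bound)
    also have "\<dots> \<le> (\<integral>x. percentile_dev n x \<partial>samples n)"
      using integrable_SC_PM[OF elim] integrable_SC integrable_percentile_dev[OF elim]
      by (intro integral_mono abs_SC_PM_diff_le) simp_all
    finally show ?case .
  qed
  then have "(\<lambda>n. (\<integral>x. SC_PM n k v x \<partial>samples n) - cost quantile) \<longlonglongrightarrow> 0"
    by (intro Lim_null_comparison[OF _ integral_percentile_dev_tendsto]) (simp only: real_norm_def)
  then show ?thesis
    by (simp add: LIM_zero_iff)
qed

text \<open>\<open>OPT = 0\<close> cannot occur for a measure with a density, but the case is harmless: then both
  expectations of \<open>SC_opt\<close> and the limit are \<open>0\<close> by the convention \<open>x / 0 = 0\<close>.\<close>

lemma SC_ratio_tendsto:
  "(\<lambda>n. (\<integral>x. SC_PM n k v x \<partial>samples n) / (\<integral>x. SC_opt n k x \<partial>samples n)) \<longlonglongrightarrow> cost quantile / OPT"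
proof (cases "OPT = 0")
  case True
  have "0 \<le> (\<integral>x. SC_opt n k x \<partial>samples n)" for n
    using SC_opt_nonneg[OF k_pos] by simp
  then have "(\<integral>x. SC_opt n k x \<partial>samples n) = 0" for n
    using integral_SC_opt_le_OPT[of n] True by (simp add: antisym)
  then show ?thesis
    using True by simp
next
  case False
  then show ?thesis
    by (intro tendsto_divide integral_SC_PM_tendsto integral_SC_opt_tendsto)
qed

end

theorem theorem3:
  fixes M :: "real measure" and \<rho> :: "real \<Rightarrow> real" and I :: "real set"
    and k :: nat and v :: "nat \<Rightarrow> real"
  assumes "standing_assumptions M \<rho> I"
    and "integrable M (\<lambda>x. \<bar>x\<bar>)"
    and "k \<ge> 1"
    and "percentile_vector k v"
    and "\<forall>j<k. 0 < v j \<and> v j < 1"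
  shows "(\<exists>\<nu>\<in>Pk k. \<forall>lam\<in>Pk k. W1 M \<nu> \<le> W1 M lam) \<and>
         (\<forall>\<nu>k \<in> Pk k. (\<forall>lam\<in>Pk k. W1 M \<nu>k \<le> W1 M lam) \<longrightarrow>
            (\<lambda>n. (\<integral>x. SC_PM n k v x \<partial>(PiM {..<n} (\<lambda>_. M))) /
                 (\<integral>x. SC_opt n k x \<partial>(PiM {..<n} (\<lambda>_. M))))
            \<longlonglongrightarrow> enn2real (W1 M (nu_Q M I k v)) / enn2real (W1 M \<nu>k))"
proof -
  interpret density: positive_density M \<rho> I
    using assms(1) by (rule positive_density.intro)
  interpret percentile_mechanism M k \<rho> I v
    using assms density.sets_M by unfold_locales auto
  obtain \<nu> where \<nu>: "\<nu> \<in> Pk k" "W1 M \<nu> = ennreal OPT"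
    using exists_W1_minimizer_eq_OPT by blast
  show ?thesis
  proof (intro conjI ballI impI)
    show "\<exists>\<nu>\<in>Pk k. \<forall>lam\<in>Pk k. W1 M \<nu> \<le> W1 M lam"
      using \<nu> W1_ge_OPT by (intro bexI[of _ \<nu>] ballI) simp_all
    fix \<nu>k assume \<nu>k: "\<nu>k \<in> Pk k" "\<forall>lam\<in>Pk k. W1 M \<nu>k \<le> W1 M lam"
    then have "W1 M \<nu>k = ennreal OPT"
      using \<nu> W1_ge_OPT[OF \<nu>k(1)] by (auto intro: antisym)
    then have W1_\<nu>k: "enn2real (W1 M \<nu>k) = OPT"
      using OPT_nonneg by simp
    have W1_nu_Q: "enn2real (W1 M (nu_Q M I k v)) = cost quantile"
      using W1_nu_Q cost_nonneg by simp
    show "(\<lambda>n. (\<integral>x. SC_PM n k v x \<partial>(PiM {..<n} (\<lambda>_. M))) /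
                 (\<integral>x. SC_opt n k x \<partial>(PiM {..<n} (\<lambda>_. M))))
        \<longlonglongrightarrow> enn2real (W1 M (nu_Q M I k v)) / enn2real (W1 M \<nu>k)"
      unfolding W1_\<nu>k W1_nu_Q by (rule SC_ratio_tendsto)
  qed
qed

end
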